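(* Let $(X,.)$ be an $n$-space and $\mu\colon\mathcal{B}(X)\to\mathbb{R}_+$ a regular (finite, nonnegative) Borel measure. For any $f\in\mathcal{B}C^*(X,.)$ and $\varepsilon>0$ there exists $g\in C^*(X,.)$ such that $\sup_{x\in X}\|g(x)\|\leq\sup_{x\in X}\|f(x)\|$ and $\int_X\|f(x)-g(x)\|\,d\mu(x)<\varepsilon$.
   Context: $M_n$ = complex $n\times n$ matrices with operator norm, $\mathbb{U}_n=\mathcal{U}_n/(\mathbb{T}I)$ ($\mathcal{U}_n$ the unitary group), $\mathfrak{u}.A=UAU^{-1}$. An $n$-space is a locally compact Hausdorff space $X$ with a continuous free action of $\mathbb{U}_n$; $\mathcal{B}(X)$ is its Borel $\sigma$-algebra. $C^*(X,.)$: continuous $f\colon X\to M_n$ vanishing at infinity with $f(\mathfrak{u}.x)=\mathfrak{u}.f(x)$; $\mathcal{B}C^*(X,.)$: bounded Borel $f\colon X\to M_n$ with the same equivariance. *)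

theory Defs
  imports "HOL-Analysis.Analysis"
begin

text \<open>Matrices in M_n are represented as complex^'n^'n, with n = CARD('n).\<close>

definition cadj :: "complex^'n^'n \<Rightarrow> complex^'n^'n" where
  "cadj A = (\<chi> i j. cnj (A $ j $ i))"

definition unitary_mat :: "complex^'n^'n \<Rightarrow> bool" where
  "unitary_mat U \<longleftrightarrow> U ** cadj U = mat 1 \<and> cadj U ** U = mat 1"

definition opnorm :: "complex^'n^'n \<Rightarrow> real" where
  "opnorm A = onorm (\<lambda>x. A *v x)"

text \<open>Action of the projective unitary group U_n/(T I), given as an action of
  U_n on which the scalar unitaries act trivially; freeness of the PU_n-action
  means that only scalar unitaries have fixed points; continuity of the
  PU_n-action is equivalent to continuity of the lifted U_n-action.\<close>
definition n_space_action :: "(complex^'n^'n \<Rightarrow> 'a::topological_space \<Rightarrow> 'a) \<Rightarrow> bool" where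
  "n_space_action act \<longleftrightarrow>
     (\<forall>x. act (mat 1) x = x) \<and>
     (\<forall>U V x. unitary_mat U \<longrightarrow> unitary_mat V \<longrightarrow> act (U ** V) x = act U (act V x)) \<and>
     (\<forall>c x. norm c = 1 \<longrightarrow> act (mat c) x = x) \<and>
     (\<forall>U x. unitary_mat U \<longrightarrow> act U x = x \<longrightarrow> (\<exists>c. norm c = 1 \<and> U = mat c)) \<and>
     continuous_on ({U. unitary_mat U} \<times> UNIV) (\<lambda>(U, x). act U x)"

definition equivariant :: "(complex^'n^'n \<Rightarrow> 'a \<Rightarrow> 'a) \<Rightarrow> ('a \<Rightarrow> complex^'n^'n) \<Rightarrow> bool" where
  "equivariant act f \<longleftrightarrow>
     (\<forall>U x. unitary_mat U \<longrightarrow> f (act U x) = U ** f x ** cadj U)"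

definition Cstar :: "(complex^'n^'n \<Rightarrow> 'a::topological_space \<Rightarrow> 'a) \<Rightarrow> ('a \<Rightarrow> complex^'n^'n) set" where
  "Cstar act = {g. continuous_on UNIV g \<and> equivariant act g \<and>
     (\<forall>e>0. \<exists>K. compact K \<and> (\<forall>x. x \<notin> K \<longrightarrow> opnorm (g x) < e))}"

definition BCstar :: "(complex^'n^'n \<Rightarrow> 'a::topological_space \<Rightarrow> 'a) \<Rightarrow> ('a \<Rightarrow> complex^'n^'n) set" where
  "BCstar act = {f. f \<in> borel_measurable borel \<and> bounded (range f) \<and> equivariant act f}"

definition regular_borel_measure :: "'a::topological_space measure \<Rightarrow> bool" where
  "regular_borel_measure M \<longleftrightarrow> sets M = sets borel \<and> finite_measure M \<and>
     (\<forall>A \<in> sets borel.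
        emeasure M A = (SUP K \<in> {K. K \<subseteq> A \<and> compact K}. emeasure M K) \<and>
        emeasure M A = (INF U \<in> {U. A \<subseteq> U \<and> open U}. emeasure M U))"

end

theory Submission
  imports Defs
begin

text \<open>By Lusin's theorem \<open>f\<close> is continuous on a compact set \<open>K\<^sub>0\<close> of almost full measure,
  and by equivariance also on its unitary orbit \<open>K\<^sub>1 \<supseteq> K\<^sub>0\<close>, which is again compact.  A Tietze
  extension of \<open>f|K\<^sub>1\<close>, radially truncated to operator norm \<open>\<le> sup \<parallel>f\<parallel>\<close> and cut off outside a
  compact set, is then averaged over the unitary group: \<open>g(x) = \<integral> W g(W\<^sup>-\<^sup>1.x) W\<^sup>-\<^sup>1 dH(W)\<close>.
  The average is continuous, equivariant, compactly supported and still bounded, and it agrees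
  with \<open>f\<close> on \<open>K\<^sub>1\<close>; the \<open>L\<^sup>1\<close> error is at most \<open>2 sup \<parallel>f\<parallel> \<mu>(X - K\<^sub>0)\<close>.
  The Haar measure \<open>H\<close> is obtained by pushing Lebesgue measure on a unitarily invariant ball of
  invertible matrices forward along Gram--Schmidt orthonormalisation, which commutes with
  left multiplication by unitaries.\<close>

section \<open>Unitary matrices and the operator norm\<close>

definition cinner :: "complex^'n \<Rightarrow> complex^'n \<Rightarrow> complex" where
  "cinner x y = (\<Sum>i\<in>UNIV. cnj (x$i) * y$i)"

lemma cadj_nth [simp]: "cadj A $ i $ j = cnj (A $ j $ i)"
  by (simp add: cadj_def)

lemma cadj_cadj [simp]: "cadj (cadj A) = A"
  by (simp add: vec_eq_iff)

lemma cadj_mat [simp]: "cadj (mat c) = mat (cnj c)"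
  by (simp add: vec_eq_iff mat_def)

lemma cadj_matrix_mult: "cadj (A ** B) = cadj B ** cadj A"
  by (simp add: vec_eq_iff matrix_matrix_mult_def mult.commute)

lemma unitary_mat_iff_left: "unitary_mat U \<longleftrightarrow> cadj U ** U = mat 1"
  unfolding unitary_mat_def using matrix_left_right_inverse by blast

lemma unitary_mat_cadj: "unitary_mat U \<Longrightarrow> unitary_mat (cadj U)"
  unfolding unitary_mat_def by simp

lemma unitary_mat_mult: "unitary_mat U \<Longrightarrow> unitary_mat V \<Longrightarrow> unitary_mat (U ** V)"
  unfolding unitary_mat_iff_left cadj_matrix_mult
  by (metis matrix_mul_assoc matrix_mul_lid)

lemma unitary_mat_1: "unitary_mat (mat 1)"
  by (simp add: unitary_mat_def)

lemma unitary_mat_imp_invertible: "unitary_mat U \<Longrightarrow> invertible U"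
  unfolding unitary_mat_def invertible_def by blast

lemma cadj_mult_unitary_cancel: "unitary_mat V \<Longrightarrow> cadj V ** (V ** A) = A"
  by (simp add: matrix_mul_assoc unitary_mat_iff_left)

lemma invertible_unitary_mult_iff:
  assumes "unitary_mat V" shows "invertible (V ** A) \<longleftrightarrow> invertible A"
  by (metis assms cadj_mult_unitary_cancel invertible_mult unitary_mat_cadj
      unitary_mat_imp_invertible)

lemma cinner_self: "cinner x x = of_real ((norm x)^2)"
proof -
  have "cnj (x$i) * x$i = of_real ((norm (x$i))^2)" for i
    by (metis complex_norm_square mult.commute)
  then have "cinner x x = (\<Sum>i\<in>UNIV. of_real ((norm (x$i))^2))"
    by (simp add: cinner_def)
  also have "\<dots> = of_real ((norm x)^2)"
    by (simp add: norm_vec_def L2_set_def sum_nonneg)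
  finally show ?thesis .
qed

lemma norm_eq_iff_cinner_self_eq: "norm x = norm y \<longleftrightarrow> cinner x x = cinner y y"
  unfolding cinner_self of_real_eq_iff by (simp add: power2_eq_iff_nonneg)

lemma cinner_matrix_vector_mult_left: "cinner (A *v x) y = cinner x (cadj A *v y)"
proof -
  have "cinner (A *v x) y = (\<Sum>i\<in>UNIV. \<Sum>j\<in>UNIV. cnj (A$i$j) * cnj (x$j) * y$i)"
    unfolding cinner_def matrix_vector_mult_def by (simp add: sum_distrib_right)
  also have "\<dots> = (\<Sum>j\<in>UNIV. \<Sum>i\<in>UNIV. cnj (A$i$j) * cnj (x$j) * y$i)"
    by (rule sum.swap)
  also have "\<dots> = cinner x (cadj A *v y)"
    unfolding cinner_def matrix_vector_mult_def by (simp add: sum_distrib_left mult_ac)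
  finally show ?thesis .
qed

lemma cinner_unitary: "unitary_mat V \<Longrightarrow> cinner (V *v x) (V *v y) = cinner x y"
  by (simp add: cinner_matrix_vector_mult_left matrix_vector_mul_assoc unitary_mat_iff_left)

lemma norm_unitary_matrix_vector_mult: "unitary_mat U \<Longrightarrow> norm (U *v x) = norm x"
  by (simp add: norm_eq_iff_cinner_self_eq cinner_unitary)

lemma cinner_diff_right: "cinner x (y - z) = cinner x y - cinner x z"
  by (simp add: cinner_def sum_subtractf right_diff_distrib)

lemma cinner_sum_right: "cinner x (\<Sum>l\<in>L. f l) = (\<Sum>l\<in>L. cinner x (f l))"
  by (simp add: cinner_def sum_distrib_left sum_component) (rule sum.swap)

lemma cinner_smult_right: "cinner x (a *s y) = a * cinner x y"
  by (simp add: cinner_def sum_distrib_left mult_ac)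

lemma scaleR_complex_vector_nth: "(r *\<^sub>R y) $ i = complex_of_real r * (y::complex^'n) $ i"
  by (metis scaleR_conv_of_real vector_scaleR_component)

lemma scaleR_eq_smult: "r *\<^sub>R (y::complex^'n) = complex_of_real r *s y"
  by (simp only: vec_eq_iff scaleR_complex_vector_nth vector_smult_component) simp

lemma cinner_scaleR_right: "cinner x (r *\<^sub>R y) = of_real r * cinner x y"
  by (simp add: scaleR_eq_smult cinner_smult_right)

lemma cinner_commute: "cinner y x = cnj (cinner x y)"
  by (simp add: cinner_def mult.commute)

lemma matrix_vector_mult_sum: "(M::'a::semiring_1^'n^'m) *v (\<Sum>l\<in>L. f l) = (\<Sum>l\<in>L. M *v f l)"
  by (induction L rule: infinite_finite_induct) (simp_all add: matrix_vector_right_distrib)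

lemma matrix_vector_mult_smult: "(M::'a::comm_semiring_1^'n^'m) *v (a *s x) = a *s (M *v x)"
  by (simp add: vec_eq_iff matrix_vector_mult_def sum_distrib_left mult_ac)

lemma matrix_vector_mult_scaleR_complex: "(M::complex^'n^'n) *v (a *\<^sub>R x) = a *\<^sub>R (M *v x)"
  by (simp add: scaleR_eq_smult matrix_vector_mult_smult)

lemma matrix_vector_mult_axis: "(M::'a::semiring_1^'n^'m) *v axis j 1 = column j M"
  by (simp add: vec_eq_iff matrix_vector_mult_def column_def axis_def if_distrib cong: if_cong)

lemma scaleR_matrix_vector_mult: "(c *\<^sub>R A) *v x = c *\<^sub>R (A *v x)"
  for A :: "'a::real_algebra_1^'n^'m"
  by (simp add: vec_eq_iff matrix_vector_mult_def scaleR_sum_right)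

lemma opnorm_matrix_vector_mult: "norm (A *v x) \<le> opnorm A * norm x"
  unfolding opnorm_def using onorm[OF matrix_vector_mul_bounded_linear] by blast

lemma opnorm_nonneg: "0 \<le> opnorm A"
  unfolding opnorm_def using onorm_pos_le[OF matrix_vector_mul_bounded_linear] by blast

lemma opnorm_le: "(\<And>x. norm (A *v x) \<le> b * norm x) \<Longrightarrow> opnorm A \<le> b"
  unfolding opnorm_def by (rule onorm_le) auto

lemma opnorm_0 [simp]: "opnorm (0::complex^'n^'n) = 0"
proof -
  have "(*v) (0::complex^'n^'n) = (\<lambda>_. 0)" by (simp add: fun_eq_iff)
  then show ?thesis unfolding opnorm_def by (simp only: onorm_zero)
qed

lemma opnorm_eq_0_iff: "opnorm A = 0 \<longleftrightarrow> A = 0"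
proof
  assume "opnorm A = 0"
  then have "A *v x = 0 *v x" for x
    using opnorm_matrix_vector_mult[of A x] by simp
  then show "A = 0" using matrix_eq by blast
qed simp

lemma opnorm_add: "opnorm (A + B) \<le> opnorm A + opnorm B"
proof (rule opnorm_le)
  fix x
  have "norm ((A + B) *v x) \<le> norm (A *v x) + norm (B *v x)"
    by (simp add: matrix_vector_mult_add_rdistrib norm_triangle_ineq)
  also have "\<dots> \<le> (opnorm A + opnorm B) * norm x"
    using add_mono[OF opnorm_matrix_vector_mult opnorm_matrix_vector_mult]
    by (simp add: distrib_right)
  finally show "norm ((A + B) *v x) \<le> (opnorm A + opnorm B) * norm x" .
qed

lemma opnorm_minus: "opnorm (- A) = opnorm A"
proof -
  have "(*v) (- A) = (\<lambda>x. - (A *v x))"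
    by (simp add: fun_eq_iff vec_eq_iff matrix_vector_mult_def sum_negf)
  then show ?thesis unfolding opnorm_def by (simp add: onorm_neg)
qed

lemma opnorm_diff: "opnorm (A - B) \<le> opnorm A + opnorm B"
  using opnorm_add[of A "- B"] by (simp add: opnorm_minus)

lemma abs_opnorm_diff_le: "\<bar>opnorm A - opnorm B\<bar> \<le> opnorm (A - B)"
  using opnorm_add[of B "A - B"] opnorm_add[of A "B - A"] opnorm_minus[of "A - B"]
  by simp

lemma opnorm_scaleR: "opnorm (c *\<^sub>R A) = \<bar>c\<bar> * opnorm A"
  unfolding opnorm_def scaleR_matrix_vector_mult
  by (rule onorm_scaleR) (rule matrix_vector_mul_bounded_linear)

lemma opnorm_le_norm: "opnorm A \<le> real CARD('n) * real CARD('n) * norm (A::complex^'n^'n)"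
proof (rule opnorm_le)
  fix x :: "complex^'n"
  have entry: "norm (A$i$j) \<le> norm A" for i j
    using Finite_Cartesian_Product.norm_nth_le[of "A$i" j] Finite_Cartesian_Product.norm_nth_le[of A i] by linarith
  have "norm ((A *v x) $ i) \<le> real CARD('n) * (norm A * norm x)" for i
  proof -
    have "norm ((A *v x) $ i) \<le> (\<Sum>j\<in>UNIV. norm (A$i$j * x$j))"
      unfolding matrix_vector_mult_def by (simp add: norm_sum)
    also have "\<dots> \<le> (\<Sum>j\<in>(UNIV::'n set). norm A * norm x)"
      by (intro sum_mono) (simp add: norm_mult mult_mono entry Finite_Cartesian_Product.norm_nth_le)
    finally show ?thesis by simp
  qed
  then have "(\<Sum>i\<in>UNIV. norm ((A *v x) $ i)) \<le> (\<Sum>i\<in>(UNIV::'n set). real CARD('n) * (norm A * norm x))"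
    by (intro sum_mono)
  moreover have "norm (A *v x) \<le> (\<Sum>i\<in>UNIV. norm ((A *v x) $ i))"
    unfolding norm_vec_def by (rule L2_set_le_sum) simp
  ultimately show "norm (A *v x) \<le> real CARD('n) * real CARD('n) * norm A * norm x"
    by (simp add: mult_ac)
qed

lemma continuous_on_opnorm: "continuous_on S (opnorm :: complex^'n^'n \<Rightarrow> real)"
proof (rule continuous_on_subset[of UNIV], rule lipschitz_on_continuous_on)
  show "(real CARD('n) * real CARD('n))-lipschitz_on UNIV (opnorm :: complex^'n^'n \<Rightarrow> real)"
    using abs_opnorm_diff_le opnorm_le_norm order_trans
    by (intro lipschitz_onI) (fastforce simp: dist_norm dist_real_def)+
qed simp

lemma opnorm_conj_unitary:
  assumes "unitary_mat U" shows "opnorm (U ** A ** cadj U) = opnorm A"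
proof -
  have le: "opnorm (V ** B ** cadj V) \<le> opnorm B" if "unitary_mat V" for V B :: "complex^'n^'n"
  proof (rule opnorm_le)
    fix x
    have "norm ((V ** B ** cadj V) *v x) = norm (B *v (cadj V *v x))"
      using that by (simp add: matrix_vector_mul_assoc[symmetric] norm_unitary_matrix_vector_mult)
    also have "\<dots> \<le> opnorm B * norm (cadj V *v x)"
      by (rule opnorm_matrix_vector_mult)
    also have "norm (cadj V *v x) = norm x"
      using that by (simp add: norm_unitary_matrix_vector_mult unitary_mat_cadj)
    finally show "norm ((V ** B ** cadj V) *v x) \<le> opnorm B * norm x" .
  qed
  have "cadj U ** (U ** A ** cadj U) ** cadj (cadj U) = A"
    using assms unfolding unitary_mat_def
    by (simp add: matrix_mul_assoc) (metis matrix_mul_assoc matrix_mul_lid matrix_mul_rid)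
  then have "opnorm A \<le> opnorm (U ** A ** cadj U)"
    using le[of "cadj U" "U ** A ** cadj U"] assms unitary_mat_cadj by metis
  with le[OF assms, of A] show ?thesis by linarith
qed

lemma continuous_on_matrix_mult [continuous_intros]:
  fixes F G :: "'b::topological_space \<Rightarrow> complex^'n^'n"
  assumes "continuous_on S F" "continuous_on S G"
  shows "continuous_on S (\<lambda>x. F x ** G x)"
  unfolding matrix_matrix_mult_def by (intro continuous_intros assms)

lemma continuous_on_cadj [continuous_intros]:
  fixes F :: "'b::topological_space \<Rightarrow> complex^'n^'n"
  assumes "continuous_on S F"
  shows "continuous_on S (\<lambda>x. cadj (F x))"
  unfolding cadj_def by (intro continuous_intros assms)

lemma closed_unitary: "closed {U::complex^'n^'n. unitary_mat U}"
  unfolding unitary_mat_def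
  by (intro closed_Collect_conj closed_Collect_eq continuous_intros)

lemma norm_row_unitary:
  assumes "unitary_mat U" shows "norm (U $ i) = 1"
proof -
  have "cinner (U$i) (U$i) = (U ** cadj U) $ i $ i"
    by (simp add: cinner_def matrix_matrix_mult_def mult.commute)
  also have "\<dots> = 1"
    using assms by (simp add: unitary_mat_def mat_def)
  finally have "complex_of_real ((norm (U$i))^2) = 1"
    by (simp only: cinner_self)
  then show ?thesis
    using norm_ge_zero[of "U$i"] by (simp only: of_real_eq_1_iff power2_eq_1_iff) linarith
qed

lemma compact_unitary: "compact {U::complex^'n^'n. unitary_mat U}"
proof -
  have "norm U \<le> real CARD('n)" if "unitary_mat U" for U :: "complex^'n^'n"
  proof -
    have "norm U \<le> (\<Sum>i\<in>UNIV. norm (U $ i))"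
      unfolding norm_vec_def by (rule L2_set_le_sum) simp
    then show ?thesis using norm_row_unitary[OF that] by simp
  qed
  then have "bounded {U::complex^'n^'n. unitary_mat U}"
    unfolding bounded_iff by blast
  then show ?thesis using closed_unitary compact_eq_bounded_closed by blast
qed

lemma norm_square_eq_sum_columns:
  "(norm (B::'a::real_normed_vector^'n^'m))^2 = (\<Sum>j\<in>UNIV. (norm (column j B))^2)"
proof -
  have "(norm B)^2 = (\<Sum>i\<in>UNIV. \<Sum>j\<in>UNIV. (norm (B $ i $ j))^2)"
    by (simp add: norm_vec_def L2_set_def sum_nonneg)
  also have "\<dots> = (\<Sum>j\<in>UNIV. \<Sum>i\<in>UNIV. (norm (B $ i $ j))^2)"
    by (rule sum.swap)
  also have "\<dots> = (\<Sum>j\<in>UNIV. (norm (column j B))^2)"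
    by (simp add: norm_vec_def L2_set_def sum_nonneg column_def)
  finally show ?thesis .
qed

lemma column_matrix_mult: "column j (V ** M) = V *v column j (M::'a::semiring_1^'n^'k)"
  by (simp add: vec_eq_iff matrix_vector_mult_def column_def matrix_matrix_mult_def)

lemma norm_unitary_matrix_mult:
  assumes "unitary_mat V" shows "norm (V ** B) = norm (B::complex^'n^'n)"
proof -
  have "(norm (V ** B))^2 = (norm B)^2"
    by (simp add: norm_square_eq_sum_columns column_matrix_mult
        norm_unitary_matrix_vector_mult assms)
  then show ?thesis by (simp add: power2_eq_iff_nonneg)
qed

lemma norm_cadj: "norm (cadj (A::complex^'n^'n)) = norm A"
proof -
  have "(norm (cadj A))^2 = (\<Sum>i\<in>UNIV. (norm (cadj A $ i))^2)"
    by (simp add: norm_vec_def L2_set_def sum_nonneg)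
  also have "\<dots> = (\<Sum>i\<in>UNIV. (norm (column i A))^2)"
    by (simp add: norm_vec_def L2_set_def sum_nonneg column_def)
  finally show ?thesis
    by (metis norm_square_eq_sum_columns norm_ge_zero power2_eq_iff_nonneg)
qed

lemma norm_conj_unitary:
  assumes "unitary_mat W" shows "norm (W ** B ** cadj W) = norm (B::complex^'n^'n)"
proof -
  have "norm (W ** B ** cadj W) = norm (cadj (B ** cadj W))"
    using assms by (simp add: matrix_mul_assoc[symmetric] norm_unitary_matrix_mult norm_cadj)
  also have "\<dots> = norm B"
    using assms by (simp add: cadj_matrix_mult norm_unitary_matrix_mult norm_cadj)
  finally show ?thesis .
qed

section \<open>Gram--Schmidt orthonormalisation\<close>

lemma invertible_iff_kernel_trivial:
  "invertible (M::'a::field^'n^'n) \<longleftrightarrow> (\<forall>x. M *v x = 0 \<longrightarrow> x = 0)"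
  using invertible_left_inverse matrix_left_invertible_ker by blast

definition col_enum :: "nat \<Rightarrow> 'n::finite" where
  "col_enum = (SOME e. bij_betw e {..<CARD('n)} UNIV)"

lemma bij_betw_col_enum: "bij_betw (col_enum :: nat \<Rightarrow> 'n::finite) {..<CARD('n)} UNIV"
proof -
  have "\<exists>e. bij_betw e {..<CARD('n)} (UNIV::'n set)"
    using ex_bij_betw_nat_finite[of "UNIV::'n set"] by (simp add: atLeast0LessThan)
  then show ?thesis unfolding col_enum_def by (rule someI_ex)
qed

lemma col_enum_eq_iff:
  "l < CARD('n) \<Longrightarrow> k < CARD('n) \<Longrightarrow> (col_enum l :: 'n::finite) = col_enum k \<longleftrightarrow> l = k"
  using bij_betw_col_enum unfolding bij_betw_def inj_on_def by auto

lemma col_enum_neq: "l < k \<Longrightarrow> k < CARD('n) \<Longrightarrow> (col_enum l :: 'n::finite) \<noteq> col_enum k"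
  using col_enum_eq_iff by (metis less_trans less_irrefl)

lemma col_enum_surj: "\<exists>k<CARD('n). (col_enum k :: 'n::finite) = i"
  using bij_betw_col_enum unfolding bij_betw_def by (metis UNIV_I imageE lessThan_iff)

definition gs_residual :: "nat \<Rightarrow> complex^'n^'n \<Rightarrow> complex^'n" where
  "gs_residual k M = column (col_enum k) M -
     (\<Sum>l<k. cinner (column (col_enum l) M) (column (col_enum k) M) *s column (col_enum l) M)"

definition gs_step :: "nat \<Rightarrow> complex^'n^'n \<Rightarrow> complex^'n^'n" where
  "gs_step k M = (\<chi> i j. if j = col_enum k
     then (inverse (norm (gs_residual k M)) *\<^sub>R gs_residual k M) $ i else M $ i $ j)"

primrec gs_iter :: "nat \<Rightarrow> complex^'n^'n \<Rightarrow> complex^'n^'n" where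
  "gs_iter 0 M = M"
| "gs_iter (Suc k) M = gs_step k (gs_iter k M)"

definition gram_schmidt :: "complex^'n^'n \<Rightarrow> complex^'n^'n" where
  "gram_schmidt M = gs_iter CARD('n) M"

definition orthonormal_first_columns :: "nat \<Rightarrow> complex^'n^'n \<Rightarrow> bool" where
  "orthonormal_first_columns k M \<longleftrightarrow> (\<forall>l<k. \<forall>l'<k.
     cinner (column (col_enum l) M) (column (col_enum l') M) = (if l = l' then 1 else 0))"

lemma gs_residual_unitary_mult:
  assumes "unitary_mat V" shows "gs_residual k (V ** M) = V *v gs_residual k M"
  using assms
  by (simp add: gs_residual_def column_matrix_mult cinner_unitary matrix_vector_mult_diff_distrib
      matrix_vector_mult_sum matrix_vector_mult_smult)

lemma gs_step_unitary_mult: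
  assumes "unitary_mat V" shows "gs_step k (V ** M) = V ** gs_step k M"
proof -
  have "column j (gs_step k (V ** M)) = column j (V ** gs_step k M)" for j
  proof (cases "j = col_enum k")
    case True
    let ?s = "inverse (norm (gs_residual k M))"
    have "column j (gs_step k (V ** M)) = ?s *\<^sub>R (V *v gs_residual k M)"
      using True assms by (simp add: column_def gs_step_def vec_eq_iff gs_residual_unitary_mult
          norm_unitary_matrix_vector_mult)
    also have "\<dots> = V *v (?s *\<^sub>R gs_residual k M)"
      by (simp add: matrix_vector_mult_scaleR_complex)
    also have "?s *\<^sub>R gs_residual k M = column j (gs_step k M)"
      using True by (simp add: column_def gs_step_def vec_eq_iff)
    finally show ?thesis by (simp add: column_matrix_mult)
  next
    case False
    then show ?thesis by (simp add: column_def gs_step_def matrix_matrix_mult_def vec_eq_iff)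
  qed
  then show ?thesis by (simp add: column_def vec_eq_iff)
qed

lemma gram_schmidt_unitary_mult:
  assumes "unitary_mat V" shows "gram_schmidt (V ** M) = V ** gram_schmidt M"
proof -
  have "gs_iter k (V ** M) = V ** gs_iter k M" for k
    by (induction k) (simp_all add: gs_step_unitary_mult assms)
  then show ?thesis by (simp add: gram_schmidt_def)
qed

lemma gs_residual_eq_matrix_vector_mult:
  assumes "k < CARD('n)"
  obtains z where "M *v z = gs_residual k M" "z $ (col_enum k :: 'n::finite) = 1"
proof
  define c where "c l = cinner (column (col_enum l) M) (column (col_enum k) M)" for l
  define z :: "complex^'n" where
    "z = axis (col_enum k) 1 - (\<Sum>l<k. c l *s axis (col_enum l) 1)"
  show "M *v z = gs_residual k M"
    by (simp add: z_def gs_residual_def c_def matrix_vector_mult_diff_distrib matrix_vector_mult_sum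
        matrix_vector_mult_smult matrix_vector_mult_axis)
  have "(col_enum k :: 'n) \<noteq> col_enum l" if "l < k" for l
    using col_enum_neq[OF that assms] by simp
  then have "(\<Sum>l<k. c l *s axis (col_enum l) 1) $ (col_enum k :: 'n) = 0"
    by (auto simp: sum_component axis_def intro!: sum.neutral)
  then show "z $ col_enum k = 1"
    by (simp add: z_def)
qed

lemma gs_residual_nonzero:
  assumes "k < CARD('n)" "invertible M" shows "gs_residual k (M::complex^'n^'n) \<noteq> 0"
proof
  assume "gs_residual k M = 0"
  obtain z where "M *v z = gs_residual k M" "z $ (col_enum k :: 'n) = 1"
    using gs_residual_eq_matrix_vector_mult[OF assms(1)] .
  with \<open>gs_residual k M = 0\<close> assms(2) show False
    by (auto simp: invertible_iff_kernel_trivial)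
qed

lemma gs_step_matrix_vector_mult:
  fixes M :: "complex^'n^'n" and k :: nat
  defines "e \<equiv> col_enum k :: 'n" and "w \<equiv> gs_residual k M"
  shows "gs_step k M *v x = M *v (x - x $ e *s axis e 1) + (x $ e * of_real (inverse (norm w))) *s w"
proof -
  have "(gs_step k M *v x) $ i = (\<Sum>j\<in>UNIV. (if j = e then of_real (inverse (norm w)) * w $ i * x $ j else 0)
     + (if j = e then 0 else M $ i $ j * x $ j))" for i
    by (auto simp: gs_step_def matrix_vector_mult_def e_def w_def scaleR_complex_vector_nth
        simp del: vector_scaleR_component intro!: sum.cong)
  moreover have "(M *v (x - x $ e *s axis e 1)) $ i = (\<Sum>j\<in>UNIV. if j = e then 0 else M $ i $ j * x $ j)" for i
    by (auto simp: matrix_vector_mult_def axis_def intro!: sum.cong)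
  ultimately show ?thesis
    by (simp add: vec_eq_iff sum.distrib mult_ac)
qed

lemma invertible_gs_step:
  assumes k: "k < CARD('n)" and inv: "invertible (M::complex^'n^'n)"
  shows "invertible (gs_step k M)"
  unfolding invertible_iff_kernel_trivial
proof (intro allI impI)
  fix x assume "gs_step k M *v x = 0"
  define e where "e = (col_enum k :: 'n)"
  define t where "t = x $ e * of_real (inverse (norm (gs_residual k M)))"
  obtain z where z: "M *v z = gs_residual k M" "z $ e = 1"
    using gs_residual_eq_matrix_vector_mult[OF k] unfolding e_def .
  have "M *v ((x - x $ e *s axis e 1) + t *s z) = 0"
    using \<open>gs_step k M *v x = 0\<close>
    by (simp add: gs_step_matrix_vector_mult matrix_vector_right_distrib
        matrix_vector_mult_smult z t_def e_def)
  then have v0: "(x - x $ e *s axis e 1) + t *s z = 0"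
    using inv by (simp add: invertible_iff_kernel_trivial)
  moreover have "((x - x $ e *s axis e 1) + t *s z) $ e = t"
    using z(2) by (simp add: axis_def)
  ultimately have "t = 0" by simp
  then have "x $ e = 0"
    using gs_residual_nonzero[OF k inv] by (simp add: t_def)
  then show "x = 0" using v0 \<open>t = 0\<close> by simp
qed

lemma cinner_gs_residual:
  assumes "orthonormal_first_columns k M" "l < k" "k < CARD('n)"
  shows "cinner (column (col_enum l :: 'n::finite) M) (gs_residual k M) = 0"
proof -
  let ?c = "\<lambda>l'. cinner (column (col_enum l') M) (column (col_enum k :: 'n) M)"
  have "(\<Sum>l'<k. ?c l' * cinner (column (col_enum l :: 'n) M) (column (col_enum l') M))
        = (\<Sum>l'<k. if l' = l then ?c l' else 0)"
    using assms by (intro sum.cong) (auto simp: orthonormal_first_columns_def)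
  then show ?thesis
    using assms(2)
    by (simp add: gs_residual_def cinner_diff_right cinner_sum_right cinner_smult_right)
qed

lemma orthonormal_first_columns_gs_step:
  assumes k: "k < CARD('n)" and inv: "invertible (M::complex^'n^'n)"
    and on: "orthonormal_first_columns k M"
  shows "orthonormal_first_columns (Suc k) (gs_step k M)"
proof -
  let ?e = "col_enum :: nat \<Rightarrow> 'n"
  define u where "u = inverse (norm (gs_residual k M)) *\<^sub>R gs_residual k M"
  have col: "column j (gs_step k M) = (if j = ?e k then u else column j M)" for j
    by (simp add: vec_eq_iff column_def gs_step_def u_def)
  have neq: "?e l \<noteq> ?e k" if "l < k" for l
    using col_enum_neq[OF that k] .
  have "norm u = 1"
    using gs_residual_nonzero[OF k inv] by (simp add: u_def)
  then have uu: "cinner u u = 1"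
    by (simp add: cinner_self)
  have cu: "cinner (column (?e l) M) u = 0" "cinner u (column (?e l) M) = 0" if "l < k" for l
    using cinner_gs_residual[OF on that k] cinner_commute[of u]
    by (simp_all add: u_def cinner_scaleR_right)
  show ?thesis
    unfolding orthonormal_first_columns_def
  proof (intro allI impI)
    fix l l' assume "l < Suc k" "l' < Suc k"
    then consider "l = k" "l' = k" | "l = k" "l' < k" | "l < k" "l' = k" | "l < k" "l' < k"
      by linarith
    then show "cinner (column (?e l) (gs_step k M)) (column (?e l') (gs_step k M))
               = (if l = l' then 1 else 0)"
      by cases (use on uu cu neq in \<open>auto simp: col orthonormal_first_columns_def\<close>)
  qed
qed

lemma unitary_gram_schmidt:
  assumes "invertible A" shows "unitary_mat (gram_schmidt (A::complex^'n^'n))"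
proof -
  have "k \<le> CARD('n) \<Longrightarrow> invertible (gs_iter k A) \<and> orthonormal_first_columns k (gs_iter k A)" for k
  proof (induction k)
    case (Suc k)
    then show ?case by (simp add: invertible_gs_step orthonormal_first_columns_gs_step)
  qed (simp add: assms orthonormal_first_columns_def)
  then have on: "orthonormal_first_columns CARD('n) (gram_schmidt A)"
    by (simp add: gram_schmidt_def)
  have "(cadj (gram_schmidt A) ** gram_schmidt A) $ i $ j = mat 1 $ i $ j" for i j
  proof -
    obtain l l' where "l < CARD('n)" "col_enum l = i" "l' < CARD('n)" "col_enum l' = j"
      using col_enum_surj by metis
    with on col_enum_eq_iff[of l l'] show ?thesis
      by (auto simp: matrix_matrix_mult_def cinner_def column_def mat_def
          orthonormal_first_columns_def)
  qed
  then show ?thesis by (simp add: unitary_mat_iff_left vec_eq_iff)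
qed

lemma borel_measurable_gs_step: "gs_step k \<in> borel_measurable (borel :: (complex^'n^'n) measure)"
proof -
  let ?\<delta> = "\<lambda>j::'n. if j = col_enum k then 1 else (0::complex)"
  have "gs_step k = (\<lambda>M. (\<chi> i j. (1 - ?\<delta> j) * M $ i $ j) +
      inverse (norm (gs_residual k M)) *\<^sub>R (\<chi> i j. ?\<delta> j * gs_residual k M $ i))"
    by (simp add: fun_eq_iff vec_eq_iff gs_step_def)
  moreover have "continuous_on UNIV (gs_residual k :: complex^'n^'n \<Rightarrow> complex^'n)"
    unfolding gs_residual_def cinner_def column_def vector_scalar_mult_def
    by (intro continuous_intros)
  ultimately show ?thesis
    by (simp only:) (intro borel_measurable_add borel_measurable_scaleR borel_measurable_inverse
        borel_measurable_continuous_onI continuous_intros)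
qed

lemma borel_measurable_gram_schmidt:
  "gram_schmidt \<in> borel_measurable (borel :: (complex^'n^'n) measure)"
proof -
  have "gs_iter k \<in> borel_measurable (borel :: (complex^'n^'n) measure)" for k
  proof (induction k)
    case (Suc k)
    have "gs_iter (Suc k) = gs_step k \<circ> gs_iter k" by (simp add: fun_eq_iff)
    then show ?case using measurable_comp[OF Suc borel_measurable_gs_step] by metis
  qed simp
  moreover have "(gram_schmidt :: complex^'n^'n \<Rightarrow> _) = gs_iter CARD('n)"
    by (simp add: fun_eq_iff gram_schmidt_def)
  ultimately show ?thesis by metis
qed

section \<open>A Haar measure on the unitary group\<close>

definition unitary_haar_measure :: "(complex^'n^'n) measure \<Rightarrow> bool" where
  "unitary_haar_measure H \<longleftrightarrow> sets H = sets borel \<and> finite_measure H \<and>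
     emeasure H (space H) > 0 \<and> (AE W in H. unitary_mat W) \<and>
     (\<forall>V. unitary_mat V \<longrightarrow> distr H borel (\<lambda>W. V ** W) = H)"

lemma borel_measurable_orthogonal_transformation:
  fixes T :: "'a::euclidean_space \<Rightarrow> 'a"
  shows "orthogonal_transformation T \<Longrightarrow> T \<in> borel_measurable borel"
  by (metis borel_measurable_continuous_onI linear_continuous_on linear_conv_bounded_linear
      orthogonal_transformation_linear)

lemma emeasure_lborel_orthogonal_vimage:
  fixes T :: "real^'k::{finite,wellorder} \<Rightarrow> real^'k::_"
  assumes T: "orthogonal_transformation T" and X: "X \<in> sets borel" "bounded X"
  shows "emeasure lborel (T -` X) = emeasure lborel X"
proof -
  have Tb: "T -` X \<in> sets borel"
    using measurable_sets_borel[OF borel_measurable_orthogonal_transformation[OF T] X(1)] .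
  have eq: "T -` X = inv T ` X"
    using orthogonal_transformation_bij[OF T] by (simp add: bij_vimage_eq_inv_image)
  have XL: "X \<in> lmeasurable"
    using X by (intro bounded_set_imp_lmeasurable) simp_all
  have invT: "orthogonal_transformation (inv T)"
    using T by (rule orthogonal_transformation_inv)
  have YL: "T -` X \<in> lmeasurable"
    unfolding eq by (rule measurable_orthogonal_image[OF invT XL])
  have "emeasure lborel (T -` X) = emeasure lebesgue (T -` X)"
    using Tb by simp
  also have "\<dots> = measure lebesgue X"
    using YL by (simp add: emeasure_eq_measure2 eq measure_orthogonal_image[OF invT XL])
  also have "\<dots> = emeasure lebesgue X"
    using XL by (simp add: emeasure_eq_measure2)
  also have "\<dots> = emeasure lborel X"
    using X(1) by simp
  finally show ?thesis .
qed

lemma distr_restricted_lborel_orthogonal: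
  fixes T :: "real^'k::{finite,wellorder} \<Rightarrow> real^'k::_"
  assumes T: "orthogonal_transformation T"
    and S: "S \<in> sets borel" "bounded S" and TS: "T -` S = S"
  shows "distr (density lborel (indicator S)) borel T = density lborel (indicator S)"
proof (rule measure_eqI)
  note Tm = borel_measurable_orthogonal_transformation[OF T]
  have restr: "emeasure (density lborel (indicator S)) Y = emeasure lborel (S \<inter> Y)"
    if "Y \<in> sets borel" for Y
    using that S(1) by (simp add: emeasure_restricted)
  fix X assume "X \<in> sets (distr (density lborel (indicator S)) borel T)"
  then have X: "X \<in> sets borel" by simp
  have "emeasure (distr (density lborel (indicator S)) borel T) X = emeasure lborel (S \<inter> T -` X)"
    using X Tm measurable_sets_borel[OF Tm X] by (subst emeasure_distr) (auto simp: restr)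
  also have "S \<inter> T -` X = T -` (S \<inter> X)"
    using TS by auto
  also have "emeasure lborel (T -` (S \<inter> X)) = emeasure lborel (S \<inter> X)"
    using X S by (intro emeasure_lborel_orthogonal_vimage[OF T]) (auto intro: bounded_subset)
  finally show "emeasure (distr (density lborel (indicator S)) borel T) X
      = emeasure (density lborel (indicator S)) X"
    using X by (simp add: restr)
qed simp

text \<open>Real coordinates on \<open>complex^'n^'n\<close>, needed because the invariance of Lebesgue measure
  under orthogonal maps is only available on \<open>real^'k\<close> for a well-ordered index type \<open>'k\<close>;
  \<open>('n \<times> 'n) bit0\<close> has the required \<open>2n\<^sup>2\<close> elements.\<close>

definition coord_index :: "('n::finite \<times> 'n) \<times> bool \<Rightarrow> ('n \<times> 'n) bit0" where
  "coord_index = (SOME \<beta>. bij \<beta>)"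

definition coords_mat :: "real^(('n::finite \<times> 'n) bit0) \<Rightarrow> complex^'n^'n" where
  "coords_mat r = (\<chi> i j. Complex (r $ coord_index ((i,j),False)) (r $ coord_index ((i,j),True)))"

definition mat_coords :: "complex^'n^'n \<Rightarrow> real^(('n::finite \<times> 'n) bit0)" where
  "mat_coords A = (\<chi> k. case inv coord_index k of ((i,j),b) \<Rightarrow> if b then Im (A $ i $ j) else Re (A $ i $ j))"

lemma bij_coord_index: "bij (coord_index :: ('n::finite \<times> 'n) \<times> bool \<Rightarrow> ('n \<times> 'n) bit0)"
proof -
  have "card (UNIV :: (('n \<times> 'n) \<times> bool) set) = card (UNIV :: ('n \<times> 'n) bit0 set)"
    by (simp add: card_cartesian_product card_UNIV_bool)
  then have "\<exists>\<beta> :: ('n \<times> 'n) \<times> bool \<Rightarrow> ('n \<times> 'n) bit0. bij \<beta>"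
    using finite_same_card_bij[of "UNIV :: (('n \<times> 'n) \<times> bool) set" "UNIV :: ('n \<times> 'n) bit0 set"]
    by auto
  then show ?thesis unfolding coord_index_def by (rule someI_ex)
qed

lemma inv_coord_index [simp]: "inv coord_index (coord_index p) = p"
  by (simp add: bij_is_inj[OF bij_coord_index])

lemma coord_index_inv [simp]: "coord_index (inv coord_index k) = k"
  by (simp add: bij_is_surj[OF bij_coord_index] surj_f_inv_f)

lemma mat_coords_coords_mat [simp]: "mat_coords (coords_mat r) = r"
proof -
  have "mat_coords (coords_mat r) $ k = r $ k" for k
  proof -
    obtain i j b where "inv coord_index k = ((i,j),b)" by (metis prod.exhaust)
    moreover from this have "k = coord_index ((i,j),b)" by (metis coord_index_inv)
    ultimately show ?thesis by (cases b) (simp_all add: mat_coords_def coords_mat_def)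
  qed
  then show ?thesis by (simp add: vec_eq_iff)
qed

lemma coords_mat_mat_coords [simp]: "coords_mat (mat_coords A) = A"
  by (simp add: vec_eq_iff coords_mat_def mat_coords_def complex_eq_iff)

lemma coords_mat_diff: "coords_mat (x - y) = coords_mat x - coords_mat y"
  by (simp add: vec_eq_iff coords_mat_def complex_eq_iff)

lemma mat_coords_diff: "mat_coords (A - B) = mat_coords A - mat_coords B"
  by (metis coords_mat_diff coords_mat_mat_coords mat_coords_coords_mat)

lemma norm_coords_mat: "norm (coords_mat (r :: real^(('n::finite \<times> 'n) bit0))) = norm r"
proof -
  let ?\<beta> = "coord_index :: ('n \<times> 'n) \<times> bool \<Rightarrow> _"
  have "(norm (coords_mat r))^2 = (\<Sum>i\<in>UNIV. \<Sum>j\<in>UNIV. \<Sum>b\<in>UNIV. (r $ ?\<beta> ((i,j),b))^2)"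
    by (simp add: norm_vec_def L2_set_def sum_nonneg coords_mat_def cmod_power2 UNIV_bool add.commute)
  also have "\<dots> = (\<Sum>p\<in>UNIV. (r $ ?\<beta> p)^2)"
    using sum.cartesian_product[of "\<lambda>q b. (r $ ?\<beta> (q,b))^2" UNIV UNIV]
      sum.cartesian_product[of "\<lambda>i j. \<Sum>b\<in>UNIV. (r $ ?\<beta> ((i,j),b))^2" UNIV UNIV]
    by (simp del: UNIV_Times_UNIV add: UNIV_Times_UNIV[symmetric])
  also have "\<dots> = (\<Sum>k\<in>UNIV. (r $ k)^2)"
    using sum.reindex_bij_betw[OF bij_coord_index[unfolded bij_betw_def[symmetric]],
        of "\<lambda>k. (r $ k)^2"] by simp
  also have "\<dots> = (norm r)^2"
    by (simp add: norm_vec_def L2_set_def sum_nonneg)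
  finally show ?thesis by (simp add: power2_eq_iff_nonneg)
qed

lemma norm_mat_coords: "norm (mat_coords A) = norm A"
  by (metis coords_mat_mat_coords norm_coords_mat)

lemma continuous_on_coords_mat: "continuous_on S coords_mat"
  unfolding coords_mat_def Complex_eq by (intro continuous_intros)

lemma orthogonal_transformation_unitary_coords:
  fixes V :: "complex^'n::finite^'n"
  assumes V: "unitary_mat V"
  shows "orthogonal_transformation (\<lambda>r. mat_coords (V ** coords_mat r))"
proof -
  have "mat_coords (V ** coords_mat x) - mat_coords (V ** coords_mat y)
      = mat_coords (V ** coords_mat (x - y))" for x y
    by (simp add: coords_mat_diff mat_coords_diff[symmetric]
        matrix_add_ldistrib[of V "coords_mat x - coords_mat y" "coords_mat y", simplified])
  moreover have "mat_coords (V ** coords_mat 0) = 0"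
  proof -
    have "coords_mat 0 = (0 :: complex^'n^'n)" "mat_coords (0 :: complex^'n^'n) = 0"
      by (metis coords_mat_diff diff_self, metis mat_coords_diff diff_self)
    moreover have "V ** 0 = 0" by (simp add: matrix_matrix_mult_def vec_eq_iff)
    ultimately show ?thesis by simp
  qed
  ultimately show ?thesis
    unfolding orthogonal_transformation_isometry
    by (simp add: dist_norm norm_mat_coords norm_coords_mat norm_unitary_matrix_mult[OF V])
qed

lemma open_invertible: "open {A :: complex^'n^'n. invertible A}"
proof -
  have "continuous_on UNIV (det :: complex^'n^'n \<Rightarrow> complex)"
    unfolding det_def by (intro continuous_intros)
  then show ?thesis
    by (simp add: invertible_det_nz open_Collect_neq continuous_on_const)
qed

definition invertible_coords :: "(real^(('n::finite \<times> 'n) bit0)) set" where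
  "invertible_coords = (coords_mat :: _ \<Rightarrow> complex^'n^'n) -` {A. invertible A} \<inter>
     ball 0 (norm (mat 1 :: complex^'n^'n) + 1)"

lemma open_invertible_coords: "open invertible_coords"
  unfolding invertible_coords_def
  by (intro open_Int open_ball open_vimage continuous_on_coords_mat open_invertible)

lemma bounded_invertible_coords: "bounded invertible_coords"
  unfolding invertible_coords_def by (meson bounded_Int bounded_ball)

lemma emeasure_invertible_coords_pos:
  "emeasure lborel (invertible_coords :: (real^(('n::finite \<times> 'n) bit0)) set) > 0"
proof -
  have op: "open (invertible_coords :: (real^(('n \<times> 'n) bit0)) set)"
    by (rule open_invertible_coords)
  have "mat_coords (mat 1 :: complex^'n^'n) \<in> invertible_coords"
    using unitary_mat_imp_invertible[OF unitary_mat_1]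
    by (simp add: invertible_coords_def norm_mat_coords)
  then obtain \<delta> where \<delta>: "\<delta> > 0" "ball (mat_coords (mat 1 :: complex^'n^'n)) \<delta> \<subseteq> invertible_coords"
    using op open_contains_ball by blast
  then have "0 < emeasure lborel (ball (mat_coords (mat 1 :: complex^'n^'n)) \<delta>)"
    using emeasure_lborel_ball_finite[of "mat_coords (mat 1 :: complex^'n^'n)" \<delta>] content_ball_pos[OF \<delta>(1)]
    by (simp add: emeasure_eq_ennreal_measure)
  also have "\<dots> \<le> emeasure lborel (invertible_coords :: (real^(('n \<times> 'n) bit0)) set)"
    using \<delta>(2) op by (intro emeasure_mono) auto
  finally show ?thesis .
qed

lemma unitary_coords_vimage_invertible_coords:
  fixes V :: "complex^'n::finite^'n"
  assumes V: "unitary_mat V"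
  shows "(\<lambda>r. mat_coords (V ** coords_mat r)) -` invertible_coords = invertible_coords"
  by (auto simp: invertible_coords_def norm_mat_coords invertible_unitary_mult_iff[OF V]
      norm_unitary_matrix_mult[OF V] norm_coords_mat)

definition invertible_ball_measure :: "(complex^'n::finite^'n) measure" where
  "invertible_ball_measure = distr (density lborel (indicator invertible_coords)) borel coords_mat"

lemma sets_invertible_ball_measure [simp]: "sets invertible_ball_measure = sets borel"
  by (simp add: invertible_ball_measure_def)

lemma space_invertible_ball_measure [simp]: "space invertible_ball_measure = UNIV"
  by (simp add: invertible_ball_measure_def)

lemma measurable_coords_mat_restricted:
  "coords_mat \<in> density lborel (indicator invertible_coords) \<rightarrow>\<^sub>M borel"
  using borel_measurable_continuous_onI[OF continuous_on_coords_mat] by simp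

lemma emeasure_invertible_ball_measure:
  "emeasure (invertible_ball_measure :: (complex^'n::finite^'n) measure) UNIV =
     emeasure lborel (invertible_coords :: (real^(('n \<times> 'n) bit0)) set)"
  unfolding invertible_ball_measure_def
  by (subst emeasure_distr[OF measurable_coords_mat_restricted])
    (simp_all add: emeasure_restricted open_invertible_coords)

lemma finite_measure_invertible_ball_measure:
  "finite_measure (invertible_ball_measure :: (complex^'n::finite^'n) measure)"
proof -
  have "emeasure lborel (invertible_coords :: (real^(('n \<times> 'n) bit0)) set) < \<infinity>"
    by (rule emeasure_bounded_finite[OF bounded_invertible_coords])
  then show ?thesis
    by (intro finite_measureI) (simp add: emeasure_invertible_ball_measure)
qed

lemma emeasure_invertible_ball_measure_pos: "emeasure invertible_ball_measure UNIV > 0"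
  by (simp add: emeasure_invertible_ball_measure emeasure_invertible_coords_pos)

lemma AE_invertible_ball_measure: "AE A in invertible_ball_measure. invertible (A :: complex^'n^'n)"
proof -
  have "AE r in density lborel (indicator invertible_coords). r \<in> invertible_coords"
    by (subst AE_density) (auto simp: indicator_def open_invertible_coords intro!: AE_I2)
  then have "AE r in density lborel (indicator invertible_coords).
      invertible (coords_mat r :: complex^'n^'n)"
    by (rule AE_mp) (simp add: invertible_coords_def)
  moreover have "{A \<in> space borel. invertible (A :: complex^'n^'n)} \<in> sets borel"
    using borel_open[OF open_invertible] by simp
  ultimately show ?thesis
    unfolding invertible_ball_measure_def by (simp only: AE_distr_iff[OF measurable_coords_mat_restricted])
qed

lemma distr_invertible_ball_measure_unitary:
  fixes V :: "complex^'n::finite^'n"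
  assumes V: "unitary_mat V"
  shows "distr invertible_ball_measure borel (\<lambda>A. V ** A) = invertible_ball_measure"
proof -
  let ?P = "density lborel (indicator (invertible_coords :: (real^(('n \<times> 'n) bit0)) set))"
  let ?T = "\<lambda>r. mat_coords (V ** coords_mat r)"
  have T_m: "?T \<in> ?P \<rightarrow>\<^sub>M borel"
    using borel_measurable_orthogonal_transformation[OF orthogonal_transformation_unitary_coords[OF V]]
    by simp
  have "distr invertible_ball_measure borel (\<lambda>A. V ** A) = distr ?P borel (\<lambda>r. coords_mat (?T r))"
    unfolding invertible_ball_measure_def using measurable_coords_mat_restricted
    by (subst distr_distr) (simp_all add: comp_def borel_measurable_continuous_onI continuous_intros)
  also have "\<dots> = distr (distr ?P borel ?T) borel coords_mat"
    using measurable_coords_mat_restricted T_m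
    by (subst distr_distr) (simp_all add: comp_def borel_measurable_continuous_onI[OF continuous_on_coords_mat])
  also have "distr ?P borel ?T = ?P"
    by (intro distr_restricted_lborel_orthogonal orthogonal_transformation_unitary_coords[OF V]
        unitary_coords_vimage_invertible_coords[OF V])
      (simp_all add: open_invertible_coords bounded_invertible_coords)
  finally show ?thesis by (simp add: invertible_ball_measure_def)
qed

lemma unitary_haar_measure_gram_schmidt:
  "unitary_haar_measure (distr invertible_ball_measure borel (gram_schmidt :: complex^'n::finite^'n \<Rightarrow> _))"
proof -
  let ?L = "invertible_ball_measure :: (complex^'n^'n) measure"
  let ?H = "distr ?L borel gram_schmidt"
  have GS_m: "gram_schmidt \<in> ?L \<rightarrow>\<^sub>M borel"
    by (simp add: measurable_cong_sets[OF sets_invertible_ball_measure refl]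
        borel_measurable_gram_schmidt)
  have mult_m: "(\<lambda>A. V ** A) \<in> borel \<rightarrow>\<^sub>M (borel :: (complex^'n^'n) measure)" for V :: "complex^'n^'n"
    by (intro borel_measurable_continuous_onI continuous_intros)
  have "distr ?H borel (\<lambda>W. V ** W) = ?H" if V: "unitary_mat V" for V
  proof -
    have "distr ?H borel (\<lambda>W. V ** W) = distr ?L borel (\<lambda>A. V ** gram_schmidt A)"
      using GS_m mult_m by (subst distr_distr) (auto simp: comp_def)
    also have "\<dots> = distr ?L borel (\<lambda>A. gram_schmidt (V ** A))"
      by (simp add: gram_schmidt_unitary_mult[OF V])
    also have "\<dots> = distr (distr ?L borel (\<lambda>A. V ** A)) borel gram_schmidt"
      using mult_m borel_measurable_gram_schmidt
      by (subst distr_distr) (auto simp: comp_def measurable_cong_sets[OF sets_invertible_ball_measure refl])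
    finally show ?thesis by (simp add: distr_invertible_ball_measure_unitary[OF V])
  qed
  moreover have "AE W in ?H. unitary_mat W"
  proof -
    have "AE A in ?L. unitary_mat (gram_schmidt A)"
      using AE_invertible_ball_measure by (rule AE_mp) (simp add: unitary_gram_schmidt)
    moreover have "{W \<in> space borel. unitary_mat (W :: complex^'n^'n)} \<in> sets borel"
      using borel_closed[OF closed_unitary] by simp
    ultimately show ?thesis
      by (simp only: AE_distr_iff[OF GS_m])
  qed
  moreover have "emeasure ?H (space ?H) = emeasure ?L UNIV"
    using GS_m by (simp add: emeasure_distr)
  then have "finite_measure ?H" "emeasure ?H (space ?H) > 0"
    using emeasure_invertible_ball_measure_pos
      finite_measure.emeasure_finite[OF finite_measure_invertible_ball_measure, of UNIV]
    by (auto intro!: finite_measureI)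
  ultimately show ?thesis
    unfolding unitary_haar_measure_def by simp
qed

section \<open>Lusin's theorem for inner regular finite measures\<close>

lemma inner_regular_compact_approx:
  fixes \<mu> :: "'a::t2_space measure"
  assumes sets: "sets \<mu> = sets borel" and fin: "finite_measure \<mu>"
    and reg: "\<forall>A\<in>sets borel. emeasure \<mu> A = (SUP K \<in> {K. K \<subseteq> A \<and> compact K}. emeasure \<mu> K)"
    and A: "A \<in> sets borel" and e: "e > 0"
  obtains K where "compact K" "K \<subseteq> A" "measure \<mu> (A - K) < e"
proof (cases "measure \<mu> A < e")
  case True
  then show ?thesis by (intro that[of "{}"]) auto
next
  case False
  interpret finite_measure \<mu> by (rule fin)
  have Ab: "A \<in> sets \<mu>" using A sets by simp
  have "ennreal (measure \<mu> A - e/2) < emeasure \<mu> A"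
    using False e Ab by (simp add: emeasure_eq_measure ennreal_less_iff)
  also have "\<dots> = (SUP K \<in> {K. K \<subseteq> A \<and> compact K}. emeasure \<mu> K)"
    using reg A by blast
  finally obtain K where K: "K \<subseteq> A" "compact K" "ennreal (measure \<mu> A - e/2) < emeasure \<mu> K"
    by (auto simp: less_SUP_iff)
  have Kb: "K \<in> sets \<mu>" using K(2) sets by (simp add: compact_imp_closed borel_closed)
  have "measure \<mu> A - e/2 < measure \<mu> K"
    using K(3) Kb False e by (simp add: emeasure_eq_measure ennreal_less_iff)
  moreover have "measure \<mu> (A - K) = measure \<mu> A - measure \<mu> K"
    using Kb Ab K(1) by (simp add: finite_measure_Diff)
  ultimately show ?thesis using K e by (intro that[of K]) auto
qed

lemma inner_regular_compact_separation:
  fixes \<mu> :: "'a::t2_space measure"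
  assumes sets: "sets \<mu> = sets borel" and fin: "finite_measure \<mu>"
    and reg: "\<forall>A\<in>sets borel. emeasure \<mu> A = (SUP K \<in> {K. K \<subseteq> A \<and> compact K}. emeasure \<mu> K)"
    and A: "A \<in> sets borel" and e: "e > 0"
  obtains K L where "compact K" "compact L" "K \<subseteq> A" "L \<inter> A = {}"
    "measure \<mu> (UNIV - (K \<union> L)) < e"
proof -
  interpret finite_measure \<mu> by (rule fin)
  have "e/2 > 0" using e by simp
  obtain K where K: "compact K" "K \<subseteq> A" "measure \<mu> (A - K) < e/2"
    using inner_regular_compact_approx[OF sets fin reg A \<open>e/2 > 0\<close>] .
  obtain L where L: "compact L" "L \<subseteq> UNIV - A" "measure \<mu> ((UNIV - A) - L) < e/2"
    using inner_regular_compact_approx[OF sets fin reg _ \<open>e/2 > 0\<close>, of "UNIV - A"] A by auto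
  have meas: "A - K \<in> sets \<mu>" "(UNIV - A) - L \<in> sets \<mu>"
    using A K(1) L(1) sets by (auto simp: compact_imp_closed borel_closed)
  have "measure \<mu> (UNIV - (K \<union> L)) \<le> measure \<mu> ((A - K) \<union> ((UNIV - A) - L))"
    using meas by (intro finite_measure_mono) auto
  also have "\<dots> \<le> measure \<mu> (A - K) + measure \<mu> ((UNIV - A) - L)"
    using meas by (intro measure_subadditive) auto
  finally show ?thesis
    using K L by (intro that[of K L]) auto
qed

lemma finite_measure_compl_INT_le:
  assumes "finite_measure \<mu>" "range C \<subseteq> sets \<mu>"
    and "\<And>n. measure \<mu> (space \<mu> - C n) \<le> e * (1/2)^n"
  shows "measure \<mu> (space \<mu> - (\<Inter>n. C n)) \<le> 2 * e"
proof -
  interpret finite_measure \<mu> by fact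
  have geom: "(\<lambda>n. e * (1/2)^n) sums (2 * e)"
    using sums_mult[OF geometric_sums[of "1/2::real"], of e] by (simp add: mult.commute)
  have su: "summable (\<lambda>n. measure \<mu> (space \<mu> - C n))"
    by (rule summable_comparison_test'[OF sums_summable[OF geom], of 0]) (simp add: assms(3))
  have "space \<mu> - (\<Inter>n. C n) = (\<Union>n. space \<mu> - C n)" by auto
  moreover have "range (\<lambda>n. space \<mu> - C n) \<subseteq> sets \<mu>"
    using assms(2) by auto
  ultimately have "measure \<mu> (space \<mu> - (\<Inter>n. C n)) \<le> (\<Sum>n. measure \<mu> (space \<mu> - C n))"
    using finite_measure_subadditive_countably[of "\<lambda>n. space \<mu> - C n"] su by simp
  also have "\<dots> \<le> (\<Sum>n. e * (1/2)^n)"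
    using su geom assms(3) by (intro suminf_le) (auto simp: sums_iff)
  also have "\<dots> = 2 * e"
    using geom by (simp add: sums_iff)
  finally show ?thesis .
qed

lemma countable_basis_enumeration:
  obtains b :: "nat \<Rightarrow> 'b::second_countable_topology set"
  where "\<And>n. open (b n)" "\<And>V. open V \<Longrightarrow> \<exists>I. V = (\<Union>n\<in>I. b n)"
proof -
  obtain B :: "'b set set" where B: "countable B" "topological_basis B"
    using ex_countable_basis by blast
  define b where "b = from_nat_into (insert {} B)"
  have rb: "range b = insert {} B"
    unfolding b_def using B(1) by (simp add: range_from_nat_into)
  show ?thesis
  proof
    show "open (b n)" for n
      using rb B(2) by (metis insertE open_empty rangeI topological_basis_open)
    show "\<exists>I. V = (\<Union>n\<in>I. b n)" if "open V" for V
    proof -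
      obtain BV where "BV \<subseteq> B" "\<Union>BV = V" using B(2) \<open>open V\<close> by (auto simp: topological_basis_def)
      moreover have "BV \<subseteq> range b" using \<open>BV \<subseteq> B\<close> rb by auto
      ultimately have "V = (\<Union>n\<in>{n. b n \<in> BV}. b n)" by auto
      then show ?thesis by blast
    qed
  qed
qed

lemma continuous_on_basis_preimages:
  fixes f :: "'a::topological_space \<Rightarrow> 'b::topological_space"
  assumes basis: "\<And>V. open V \<Longrightarrow> \<exists>I. V = (\<Union>n\<in>I. b n)"
    and L: "\<And>n. closed (L n)" and preimage: "\<And>x n. x \<in> C \<Longrightarrow> f x \<in> b n \<longleftrightarrow> x \<notin> L n"
  shows "continuous_on C f"
  unfolding continuous_on_open_invariant
proof (intro allI impI)
  fix V :: "'b set" assume "open V"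
  then obtain I where "V = (\<Union>n\<in>I. b n)" using basis by blast
  then have "(\<Union>n\<in>I. - L n) \<inter> C = f -` V \<inter> C"
    using preimage by auto
  moreover have "open (\<Union>n\<in>I. - L n)"
    using L by (intro open_UN) auto
  ultimately show "\<exists>U. open U \<and> U \<inter> C = f -` V \<inter> C" by blast
qed

lemma lusin_compact:
  fixes \<mu> :: "'a::t2_space measure" and f :: "'a \<Rightarrow> 'b::second_countable_topology"
  assumes sets: "sets \<mu> = sets borel" and fin: "finite_measure \<mu>"
    and reg: "\<forall>A\<in>sets borel. emeasure \<mu> A = (SUP K \<in> {K. K \<subseteq> A \<and> compact K}. emeasure \<mu> K)"
    and f: "f \<in> borel_measurable borel" and d: "d > 0"
  obtains K where "compact K" "continuous_on K f" "measure \<mu> (UNIV - K) < d"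
proof -
  obtain b :: "nat \<Rightarrow> 'b set" where b: "\<And>n. open (b n)" "\<And>V. open V \<Longrightarrow> \<exists>I. V = (\<Union>n\<in>I. b n)"
    using countable_basis_enumeration by blast
  have "\<exists>K L. compact K \<and> compact L \<and> K \<subseteq> f -` b n \<and> L \<inter> f -` b n = {} \<and>
      measure \<mu> (UNIV - (K \<union> L)) < d/4 * (1/2)^n" for n
  proof -
    have preimage: "f -` b n \<in> sets borel" using measurable_sets_borel[OF f] b(1) by simp
    have pos: "d/4 * (1/2)^n > 0" using d by simp
    obtain K L where "compact K" "compact L" "K \<subseteq> f -` b n" "L \<inter> f -` b n = {}"
      "measure \<mu> (UNIV - (K \<union> L)) < d/4 * (1/2)^n"
      by (rule inner_regular_compact_separation[OF sets fin reg preimage pos])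
    then show ?thesis by blast
  qed
  then obtain K L where KL: "\<And>n. compact (K n)" "\<And>n. compact (L n)" "\<And>n. K n \<subseteq> f -` b n"
      "\<And>n. L n \<inter> f -` b n = {}" "\<And>n. measure \<mu> (UNIV - (K n \<union> L n)) < d/4 * (1/2)^n"
    by metis
  define C where "C = (\<Inter>n. K n \<union> L n)"
  have "closed C" unfolding C_def using KL(1,2) by (intro closed_INT) (auto intro: compact_imp_closed)
  moreover have "C \<subseteq> K 0 \<union> L 0" by (auto simp: C_def)
  ultimately have "compact C"
    using compact_Int_closed[of "K 0 \<union> L 0" C] KL(1,2) by (simp add: Int_absorb1 compact_Un)
  have space: "space \<mu> = UNIV"
    using sets by (metis sets_eq_imp_space_eq space_borel)
  have "measure \<mu> (UNIV - C) \<le> 2 * (d/4)"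
    unfolding C_def space[symmetric]
  proof (rule finite_measure_compl_INT_le[OF fin])
    show "range (\<lambda>n. K n \<union> L n) \<subseteq> sets \<mu>"
      using KL(1,2) sets by (auto simp: compact_imp_closed borel_closed)
  qed (use KL(5) space in \<open>simp add: less_imp_le\<close>)
  then have "measure \<mu> (UNIV - C) < d" using d by simp
  moreover have "continuous_on C f"
  proof (rule continuous_on_basis_preimages[where b = b and L = L])
    show "closed (L n)" for n using KL(2) by (rule compact_imp_closed)
    show "f x \<in> b n \<longleftrightarrow> x \<notin> L n" if "x \<in> C" for x n
      using that KL(3)[of n] KL(4)[of n] by (auto simp: C_def)
  qed (rule b(2))
  ultimately show ?thesis using that[OF \<open>compact C\<close>] by blast
qed

section \<open>Bounded continuous extensions with compact support\<close>

lemma locally_compact_space_euclideanI: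
  assumes "locally compact (UNIV :: 'a::topological_space set)"
  shows "locally_compact_space (euclidean :: 'a topology)"
  unfolding locally_compact_space_def
proof (intro ballI)
  fix x :: 'a
  obtain u v where "openin (top_of_set UNIV) u" "compact v" "x \<in> u" "u \<subseteq> v"
    using assms unfolding locally_def by (meson UNIV_I openin_subtopology_self)
  then show "\<exists>U K. openin euclidean U \<and> compactin euclidean K \<and> x \<in> U \<and> U \<subseteq> K"
    by (metis compactin_euclidean_iff subtopology_UNIV)
qed

lemma Hausdorff_space_euclidean_t2: "Hausdorff_space (euclidean :: 'a::t2_space topology)"
  unfolding Hausdorff_space_def by (metis disjnt_def hausdorff open_openin)

lemma completely_regular_space_euclideanI:
  assumes "locally compact (UNIV :: 'a::t2_space set)"
  shows "completely_regular_space (euclidean :: 'a topology)"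
  using locally_compact_space_euclideanI[OF assms] Hausdorff_space_euclidean_t2
  by (intro locally_compact_regular_imp_completely_regular_space) auto

lemma continuous_extension_euclidean:
  fixes K :: "'a::t2_space set" and f :: "'a \<Rightarrow> 'b::euclidean_space"
  assumes lc: "locally compact (UNIV :: 'a set)" and K: "compact K" and f: "continuous_on K f"
  obtains h where "continuous_on UNIV h" "\<And>x. x \<in> K \<Longrightarrow> h x = f x"
proof -
  have "\<exists>h. continuous_on UNIV h \<and> (\<forall>x\<in>K. h x = f x \<bullet> b)" for b :: 'b
  proof -
    have "continuous_map (subtopology euclidean K) euclideanreal (\<lambda>x. f x \<bullet> b)"
      using f by (simp add: continuous_intros)
    then obtain h where "continuous_map euclidean euclideanreal h" "\<And>x. x \<in> K \<Longrightarrow> h x = f x \<bullet> b"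
      using Tietze_extension_completely_regular[OF completely_regular_space_euclideanI[OF lc],
          of K UNIV "\<lambda>x. f x \<bullet> b"] K
      by (auto simp: is_interval_univ compactin_euclidean_iff)
    then show ?thesis by auto
  qed
  then obtain h where h: "\<And>b. continuous_on UNIV (h b)" "\<And>b x. x \<in> K \<Longrightarrow> h b x = f x \<bullet> b"
    by metis
  show ?thesis
  proof
    show "continuous_on UNIV (\<lambda>x. \<Sum>b\<in>Basis. h b x *\<^sub>R b)"
      by (intro continuous_intros h)
    show "(\<Sum>b\<in>Basis. h b x *\<^sub>R b) = f x" if "x \<in> K" for x
      using that h(2) by (simp add: euclidean_representation)
  qed
qed

lemma compactly_supported_cutoff:
  fixes K :: "'a::t2_space set"
  assumes lc: "locally compact (UNIV :: 'a set)" and K: "compact K"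
  obtains \<phi> :: "'a \<Rightarrow> real" and L where "continuous_on UNIV \<phi>" "\<And>x. \<phi> x \<in> {0..1}"
    "\<And>x. x \<in> K \<Longrightarrow> \<phi> x = 1" "compact L" "\<And>x. x \<notin> L \<Longrightarrow> \<phi> x = 0"
proof -
  have Kc: "compactin euclidean K" using K by (simp add: compactin_euclidean_iff)
  obtain U L where UL: "openin euclidean U" "compactin euclidean L" "K \<subseteq> U" "U \<subseteq> L"
    using locally_compact_space_compact_closed_compact[of euclidean]
      locally_compact_space_euclideanI[OF lc] Hausdorff_space_euclidean_t2 Kc by blast
  have "closedin euclidean (UNIV - U)" "disjnt K (UNIV - U)"
    using UL(1,3) by (auto simp: closedin_def Diff_Diff_Int disjnt_def)
  then obtain \<phi> :: "'a \<Rightarrow> real" where \<phi>: "continuous_map euclidean (top_of_set {0..1}) \<phi>"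
      "\<phi> ` (UNIV - U) \<subseteq> {0}" "\<phi> ` K \<subseteq> {1}"
    using Urysohn_completely_regular_compact_closed[of 0 1 euclidean K "UNIV - U"]
      completely_regular_space_euclideanI[OF lc] Kc by auto
  show ?thesis
  proof
    show "continuous_on UNIV \<phi>" "\<phi> x \<in> {0..1}" for x
      using \<phi>(1) by (auto simp: continuous_map_in_subtopology)
    show "compact L" using UL(2) by (simp add: compactin_euclidean_iff)
    show "\<phi> x = 1" if "x \<in> K" for x
      using that \<phi>(3) by blast
    show "\<phi> x = 0" if "x \<notin> L" for x
      using that UL(4) \<phi>(2) by blast
  qed
qed

lemma opnorm_truncation:
  assumes M: "M \<ge> 0"
  obtains r :: "complex^'n^'n \<Rightarrow> complex^'n^'n"
  where "continuous_on UNIV r" "\<And>B. opnorm (r B) \<le> M" "\<And>B. opnorm B \<le> M \<Longrightarrow> r B = B"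
proof (cases "M = 0")
  case True
  then show ?thesis
    by (intro that[of "\<lambda>_. 0"]) (auto, metis antisym opnorm_eq_0_iff opnorm_nonneg)
next
  case False
  with M have M0: "M > 0" by simp
  define r where "r B = (M / max M (opnorm B)) *\<^sub>R B" for B :: "complex^'n^'n"
  show ?thesis
  proof
    show "continuous_on UNIV r"
      unfolding r_def using M0
      by (intro continuous_intros continuous_on_divide continuous_on_max continuous_on_opnorm) auto
    show "opnorm (r B) \<le> M" for B
      using M0 opnorm_nonneg[of B] by (simp add: r_def opnorm_scaleR divide_le_eq field_simps)
    show "r B = B" if "opnorm B \<le> M" for B
      using that M0 by (simp add: r_def max_def)
  qed
qed

lemma bounded_compactly_supported_extension:
  fixes K :: "'a::t2_space set" and f :: "'a \<Rightarrow> complex^'n^'n"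
  assumes lc: "locally compact (UNIV :: 'a set)" and K: "compact K" and f: "continuous_on K f"
    and bound: "\<And>x. x \<in> K \<Longrightarrow> opnorm (f x) \<le> M" and M: "M \<ge> 0"
  obtains g C where "continuous_on UNIV g" "\<And>x. x \<in> K \<Longrightarrow> g x = f x" "\<And>x. opnorm (g x) \<le> M"
    "compact C" "\<And>x. x \<notin> C \<Longrightarrow> g x = 0"
proof -
  obtain h where h: "continuous_on UNIV h" "\<And>x. x \<in> K \<Longrightarrow> h x = f x"
    using continuous_extension_euclidean[OF lc K f] by metis
  obtain \<phi> :: "'a \<Rightarrow> real" and C where \<phi>: "continuous_on UNIV \<phi>" "\<And>x. \<phi> x \<in> {0..1}"
    "\<And>x. x \<in> K \<Longrightarrow> \<phi> x = 1" "compact C" "\<And>x. x \<notin> C \<Longrightarrow> \<phi> x = 0"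
    using compactly_supported_cutoff[OF lc K] by metis
  obtain r :: "complex^'n^'n \<Rightarrow> complex^'n^'n" where r: "continuous_on UNIV r"
    "\<And>B. opnorm (r B) \<le> M" "\<And>B. opnorm B \<le> M \<Longrightarrow> r B = B"
    using opnorm_truncation[OF M] by metis
  show ?thesis
  proof
    show "continuous_on UNIV (\<lambda>x. \<phi> x *\<^sub>R r (h x))"
      by (intro continuous_intros \<phi>(1) continuous_on_compose2[OF r(1) h(1)]) auto
    show "opnorm (\<phi> x *\<^sub>R r (h x)) \<le> M" for x
    proof -
      have "\<phi> x * opnorm (r (h x)) \<le> 1 * M"
        using \<phi>(2)[of x] r(2)[of "h x"] opnorm_nonneg[of "r (h x)"] by (intro mult_mono) auto
      then show ?thesis using \<phi>(2)[of x] by (simp add: opnorm_scaleR)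
    qed
    show "\<phi> x *\<^sub>R r (h x) = f x" if "x \<in> K" for x
      using that \<phi>(3) h(2) r(3) bound by simp
    show "\<phi> x *\<^sub>R r (h x) = 0" if "x \<notin> C" for x
      using that \<phi>(5) by simp
  qed (rule \<phi>(4))
qed

section \<open>Unitary orbits in an n-space\<close>

context
  fixes act :: "complex^'n^'n \<Rightarrow> 'a::topological_space \<Rightarrow> 'a"
  assumes act: "n_space_action act"
begin

lemma n_space_action_1: "act (mat 1) x = x"
  using act by (simp add: n_space_action_def)

lemma n_space_action_mult:
  "unitary_mat U \<Longrightarrow> unitary_mat V \<Longrightarrow> act (U ** V) x = act U (act V x)"
  using act by (simp add: n_space_action_def)

lemma continuous_on_n_space_action: "continuous_on ({U. unitary_mat U} \<times> UNIV) (\<lambda>(U, x). act U x)"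
  using act by (simp add: n_space_action_def)

lemma n_space_action_cadj:
  assumes "unitary_mat W"
  shows "act W (act (cadj W) x) = x" "act (cadj W) (act W x) = x"
  using assms n_space_action_mult[of W "cadj W"] n_space_action_mult[of "cadj W" W]
  by (simp_all add: unitary_mat_cadj n_space_action_1 unitary_mat_def)

lemma continuous_on_n_space_action_compose:
  assumes "continuous_on S u" "continuous_on S v" "\<And>s. s \<in> S \<Longrightarrow> unitary_mat (u s)"
  shows "continuous_on S (\<lambda>s. act (u s) (v s))"
  using continuous_on_compose2[OF continuous_on_n_space_action, of S "\<lambda>s. (u s, v s)"] assms
  by (auto intro!: continuous_intros)

end

definition unitary_orbit :: "(complex^'n^'n \<Rightarrow> 'a \<Rightarrow> 'a) \<Rightarrow> 'a set \<Rightarrow> 'a set" where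
  "unitary_orbit act K = (\<lambda>(U, x). act U x) ` ({U. unitary_mat U} \<times> K)"

lemma compact_unitary_orbit:
  assumes "n_space_action act" "compact K" shows "compact (unitary_orbit act K)"
  unfolding unitary_orbit_def
  using compact_Times[OF compact_unitary assms(2)] continuous_on_n_space_action[OF assms(1)]
  by (intro compact_continuous_image) (auto elim: continuous_on_subset)

lemma subset_unitary_orbit:
  assumes "n_space_action act" shows "K \<subseteq> unitary_orbit act K"
proof
  fix x assume "x \<in> K"
  then have "(mat 1, x) \<in> {U. unitary_mat U} \<times> K" using unitary_mat_1 by auto
  then show "x \<in> unitary_orbit act K"
    unfolding unitary_orbit_def using n_space_action_1[OF assms, of x] by force
qed

lemma unitary_orbit_invariant:
  assumes "n_space_action act" "unitary_mat W" "y \<in> unitary_orbit act K"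
  shows "act W y \<in> unitary_orbit act K"
proof -
  obtain U x where "unitary_mat U" "x \<in> K" "y = act U x"
    using assms(3) by (auto simp: unitary_orbit_def)
  then have "act W y = act (W ** U) x" "(W ** U, x) \<in> {U. unitary_mat U} \<times> K"
    using assms(1,2) by (simp_all add: n_space_action_mult unitary_mat_mult)
  then show ?thesis unfolding unitary_orbit_def by force
qed

text \<open>Equivariance transports continuity on \<open>K\<close> to its orbit: the preimage of a closed set
  under \<open>f\<close> in the orbit is the image of a compact subset of \<open>U(n) \<times> K\<close>.\<close>

lemma continuous_on_unitary_orbit:
  fixes act :: "complex^'n^'n \<Rightarrow> 'a::t2_space \<Rightarrow> 'a" and f :: "'a \<Rightarrow> complex^'n^'n"
  assumes act: "n_space_action act" and eqv: "equivariant act f"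
    and K: "compact K" and f: "continuous_on K f"
  shows "continuous_on (unitary_orbit act K) f"
  unfolding continuous_on_closed_invariant
proof (intro allI impI)
  fix B :: "(complex^'n^'n) set" assume B: "closed B"
  let ?UK = "{U::complex^'n^'n. unitary_mat U} \<times> K"
  define F where "F p = fst p ** f (snd p) ** cadj (fst p)" for p :: "(complex^'n^'n) \<times> 'a"
  have cUK: "compact ?UK" using compact_unitary K by (rule compact_Times)
  have "continuous_on ?UK (\<lambda>p. f (snd p))"
    by (rule continuous_on_compose2[OF f]) (auto intro: continuous_intros)
  then have "continuous_on ?UK F" unfolding F_def by (intro continuous_intros)
  then have "closed (?UK \<inter> F -` B)"
    using compact_imp_closed[OF cUK] B by (rule continuous_closed_preimage)
  then have "compact (?UK \<inter> (?UK \<inter> F -` B))"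
    by (rule compact_Int_closed[OF cUK])
  then have "compact (?UK \<inter> F -` B)"
    by (simp add: Int_assoc[symmetric])
  then have "compact ((\<lambda>(U,x). act U x) ` (?UK \<inter> F -` B))"
    using continuous_on_n_space_action[OF act]
    by (intro compact_continuous_image) (auto elim: continuous_on_subset)
  moreover have "(\<lambda>(U,x). act U x) ` (?UK \<inter> F -` B) \<inter> unitary_orbit act K = f -` B \<inter> unitary_orbit act K"
  proof -
    have F: "F (U, x) = f (act U x)" if "unitary_mat U" for U x
      using eqv that by (simp add: equivariant_def F_def)
    have "(\<lambda>(U,x). act U x) ` (?UK \<inter> F -` B) = {act U x | U x. unitary_mat U \<and> x \<in> K \<and> F (U, x) \<in> B}"
      by (auto simp: image_iff)
    also have "\<dots> = f -` B \<inter> unitary_orbit act K"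
      by (auto simp: F unitary_orbit_def image_iff) (metis F)
    finally show ?thesis by blast
  qed
  ultimately show "\<exists>A. closed A \<and> A \<inter> unitary_orbit act K = f -` B \<inter> unitary_orbit act K"
    by (meson compact_imp_closed)
qed

section \<open>Averaging over the unitary group\<close>

lemma norm_integral_le_measure_mult:
  fixes f :: "'b \<Rightarrow> 'c::{banach,second_countable_topology}"
  assumes "finite_measure M" "integrable M f" "\<And>x. x \<in> space M \<Longrightarrow> norm (f x) \<le> B"
  shows "norm (integral\<^sup>L M f) \<le> measure M (space M) * B"
proof -
  interpret finite_measure M by fact
  have "norm (integral\<^sup>L M f) \<le> (\<integral>x. norm (f x) \<partial>M)" by (rule integral_norm_bound)
  also have "\<dots> \<le> (\<integral>x. B \<partial>M)"
    using assms(2,3) by (intro integral_mono) auto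
  also have "\<dots> = measure M (space M) * B" by simp
  finally show ?thesis .
qed

lemma compact_parameter_uniform_continuity:
  fixes F :: "'u::metric_space \<times> 'a::topological_space \<Rightarrow> 'v::metric_space"
  assumes K: "compact K" and F: "continuous_on (K \<times> UNIV) F" and e: "e > 0"
  obtains N where "open N" "x0 \<in> N" "\<And>x W. x \<in> N \<Longrightarrow> W \<in> K \<Longrightarrow> dist (F (W, x)) (F (W, x0)) < e"
proof -
  have "\<exists>A B. open A \<and> open B \<and> W \<in> A \<and> x0 \<in> B \<and>
           (\<forall>W'\<in>K. \<forall>x\<in>B. W' \<in> A \<longrightarrow> dist (F (W', x)) (F (W, x0)) < e/2)" if W: "W \<in> K" for W
  proof -
    obtain Op where Op: "open Op" "(W, x0) \<in> Op"
      "\<forall>y\<in>K \<times> UNIV. y \<in> Op \<longrightarrow> F y \<in> ball (F (W, x0)) (e/2)"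
      using F W e unfolding continuous_on_topological
      by (metis UNIV_I centre_in_ball half_gt_zero mem_Sigma_iff open_ball)
    obtain A B where "open A" "open B" "W \<in> A" "x0 \<in> B" "A \<times> B \<subseteq> Op"
      using open_prod_elim[OF Op(1,2)] by (metis mem_Sigma_iff)
    then show ?thesis
      using Op(3) by (intro exI[of _ A] exI[of _ B]) (force simp: dist_commute)
  qed
  then obtain A B where AB: "\<And>W. W \<in> K \<Longrightarrow> open (A W) \<and> open (B W) \<and> W \<in> A W \<and> x0 \<in> B W \<and>
           (\<forall>W'\<in>K. \<forall>x\<in>B W. W' \<in> A W \<longrightarrow> dist (F (W', x)) (F (W, x0)) < e/2)"
    by metis
  obtain D where D: "D \<subseteq> K" "finite D" "K \<subseteq> (\<Union>W\<in>D. A W)"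
    using compactE_image[OF K, of K A] AB by blast
  show ?thesis
  proof
    show "open (\<Inter>W\<in>D. B W)" "x0 \<in> (\<Inter>W\<in>D. B W)"
      using D AB by (auto intro: open_INT)
    fix x W' assume x: "x \<in> (\<Inter>W\<in>D. B W)" and W': "W' \<in> K"
    then obtain W where W: "W \<in> D" "W' \<in> A W" using D by auto
    then have "dist (F (W', x)) (F (W, x0)) < e/2" "dist (F (W', x0)) (F (W, x0)) < e/2"
      using x AB[of W] D W' by auto
    then show "dist (F (W', x)) (F (W', x0)) < e"
      using dist_triangle[of "F (W', x)" "F (W', x0)" "F (W, x0)"]
        dist_commute[of "F (W', x0)" "F (W, x0)"] by linarith
  qed
qed

lemma bounded_range_compact_support:
  fixes g :: "'a::topological_space \<Rightarrow> 'b::real_normed_vector"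
  assumes "continuous_on UNIV g" "compact C" "\<And>x. x \<notin> C \<Longrightarrow> g x = 0"
  shows "bounded (range g)"
proof -
  have "bounded (g ` C)"
    using assms(1,2) by (intro compact_imp_bounded compact_continuous_image)
      (auto intro: continuous_on_subset)
  moreover have "range g \<subseteq> insert 0 (g ` C)"
    using assms(3) by auto
  ultimately show ?thesis
    by (meson bounded_insert bounded_subset)
qed

lemma bounded_linear_conj_unitary:
  assumes "unitary_mat V" shows "bounded_linear (\<lambda>B::complex^'n^'n. V ** B ** cadj V)"
proof (rule bounded_linear_intro[where K=1])
  show "V ** (B + C) ** cadj V = V ** B ** cadj V + V ** C ** cadj V" for B C :: "complex^'n^'n"
    unfolding matrix_add_ldistrib
    by (simp add: vec_eq_iff matrix_matrix_mult_def distrib_right sum.distrib)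
  show "V ** (r *\<^sub>R B) ** cadj V = r *\<^sub>R (V ** B ** cadj V)" for r and B :: "complex^'n^'n"
    by (simp add: vec_eq_iff matrix_matrix_mult_def scaleR_sum_right sum_distrib_left mult_ac)
  show "norm (V ** B ** cadj V) \<le> norm B * 1" for B :: "complex^'n^'n"
    using assms by (simp add: norm_conj_unitary)
qed

lemma bounded_linear_matrix_vector_mult_left: "bounded_linear (\<lambda>B::complex^'n^'n. B *v v)"
proof (rule bounded_linear_intro[where K="real CARD('n) * real CARD('n) * norm v"])
  show "(B + C) *v v = B *v v + C *v v" for B C :: "complex^'n^'n"
    by (simp add: matrix_vector_mult_add_rdistrib)
  show "(r *\<^sub>R B) *v v = r *\<^sub>R (B *v v)" for r and B :: "complex^'n^'n"
    by (rule scaleR_matrix_vector_mult)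
  show "norm (B *v v) \<le> norm B * (real CARD('n) * real CARD('n) * norm v)" for B :: "complex^'n^'n"
    using opnorm_matrix_vector_mult[of B v] mult_right_mono[OF opnorm_le_norm[of B], of "norm v"]
    by (simp add: mult_ac)
qed

text \<open>Translates are set to \<open>0\<close> off the unitary group, which carries Haar measure only
  almost everywhere.\<close>

definition unitary_translate ::
    "(complex^'n^'n \<Rightarrow> 'a \<Rightarrow> 'a) \<Rightarrow> ('a \<Rightarrow> complex^'n^'n) \<Rightarrow> complex^'n^'n \<Rightarrow> 'a \<Rightarrow> complex^'n^'n"
  where "unitary_translate act g W x = (if unitary_mat W then W ** g (act (cadj W) x) ** cadj W else 0)"

definition unitary_average ::
    "(complex^'n^'n) measure \<Rightarrow> (complex^'n^'n \<Rightarrow> 'a \<Rightarrow> 'a) \<Rightarrow> ('a \<Rightarrow> complex^'n^'n) \<Rightarrow> 'a \<Rightarrow> complex^'n^'n"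
  where "unitary_average H act g x = (1 / measure H (space H)) *\<^sub>R (\<integral>W. unitary_translate act g W x \<partial>H)"

lemma unitary_translate_mult:
  assumes act: "n_space_action act" and V: "unitary_mat V"
  shows "unitary_translate act g (V ** W) (act V x) = V ** unitary_translate act g W x ** cadj V"
proof (cases "unitary_mat W")
  case True
  have "act (cadj (V ** W)) (act V x) = act (cadj W) (act (cadj V) (act V x))"
    using n_space_action_mult[OF act unitary_mat_cadj[OF True] unitary_mat_cadj[OF V]]
    by (simp add: cadj_matrix_mult)
  then show ?thesis
    using True V n_space_action_cadj[OF act V]
    by (simp add: unitary_translate_def unitary_mat_mult cadj_matrix_mult matrix_mul_assoc)
next
  case False
  then have "\<not> unitary_mat (V ** W)"
    using V unitary_mat_cadj unitary_mat_mult cadj_mult_unitary_cancel by metis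
  then show ?thesis using False by (simp add: unitary_translate_def)
qed

locale unitary_averaging =
  fixes act :: "complex^'n^'n \<Rightarrow> 'a::t2_space \<Rightarrow> 'a" and H :: "(complex^'n^'n) measure"
    and g :: "'a \<Rightarrow> complex^'n^'n"
  assumes act: "n_space_action act" and haar: "unitary_haar_measure H"
    and g_cont: "continuous_on UNIV g" and g_bounded: "bounded (range g)"
begin

abbreviation "avg \<equiv> unitary_average H act g"

lemma sets_H: "sets H = sets borel" and finite_H: "finite_measure H"
  and pos_H: "emeasure H (space H) > 0" and AE_unitary_H: "AE W in H. unitary_mat W"
  and invariant_H: "\<And>V. unitary_mat V \<Longrightarrow> distr H borel (\<lambda>W. V ** W) = H"
  using haar by (simp_all add: unitary_haar_measure_def)

lemma continuous_on_translate: "continuous_on ({W. unitary_mat W} \<times> UNIV)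
    (\<lambda>p. fst p ** g (act (cadj (fst p)) (snd p)) ** cadj (fst p))"
proof -
  have "continuous_on ({W. unitary_mat W} \<times> UNIV) (\<lambda>p. act (cadj (fst p)) (snd p))"
    by (rule continuous_on_n_space_action_compose[OF act])
      (auto intro!: continuous_intros simp: unitary_mat_cadj)
  then have "continuous_on ({W. unitary_mat W} \<times> UNIV) (\<lambda>p. g (act (cadj (fst p)) (snd p)))"
    by (rule continuous_on_compose2[OF g_cont]) auto
  then show ?thesis by (intro continuous_intros)
qed

lemma measurable_translate: "(\<lambda>W. unitary_translate act g W x) \<in> borel_measurable H"
proof -
  have "continuous_on {W. unitary_mat W} (\<lambda>W. W ** g (act (cadj W) x) ** cadj W)"
    by (rule continuous_on_compose2[OF continuous_on_translate, of _ "\<lambda>W. (W, x)", simplified])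
      (auto intro!: continuous_intros)
  then have "(\<lambda>W. if W \<in> {W. unitary_mat W} then W ** g (act (cadj W) x) ** cadj W else 0)
      \<in> borel_measurable borel"
    using closed_unitary by (intro borel_measurable_continuous_on_if) (auto intro: borel_closed)
  then show ?thesis
    unfolding measurable_cong_sets[OF sets_H refl] by (simp add: unitary_translate_def)
qed

lemma norm_translate_le:
  obtains B where "B \<ge> 0" "\<And>W x. norm (unitary_translate act g W x) \<le> B"
proof -
  obtain B where B: "\<And>x. norm (g x) \<le> B"
    using g_bounded by (auto simp: bounded_iff)
  have "B \<ge> 0" using B norm_ge_zero order_trans by blast
  moreover have "norm (unitary_translate act g W x) \<le> B" for W x
    using B \<open>B \<ge> 0\<close> by (simp add: unitary_translate_def norm_conj_unitary)
  ultimately show ?thesis by (rule that)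
qed

lemma integrable_translate: "integrable H (\<lambda>W. unitary_translate act g W x)"
proof -
  obtain B where "\<And>W x. norm (unitary_translate act g W x) \<le> B"
    using norm_translate_le by blast
  then show ?thesis
    using finite_H measurable_translate
    by (intro finite_measure.integrable_const_bound[where B=B]) auto
qed

lemma measure_H_pos: "measure H (space H) > 0"
  using pos_H finite_H by (simp add: finite_measure.emeasure_eq_measure)

lemma continuous_on_average: "continuous_on UNIV avg"
  unfolding continuous_on_eq_continuous_at[OF open_UNIV] isCont_def
proof (intro ballI tendstoI)
  fix x0 :: 'a and e :: real assume "e > 0"
  let ?c = "measure H (space H)"
  obtain N where N: "open N" "x0 \<in> N"
    "\<And>x W. x \<in> N \<Longrightarrow> W \<in> {W. unitary_mat W} \<Longrightarrow>
       dist (W ** g (act (cadj W) x) ** cadj W) (W ** g (act (cadj W) x0) ** cadj W) < e/2"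
    by (rule compact_parameter_uniform_continuity[OF compact_unitary continuous_on_translate
          half_gt_zero[OF \<open>e > 0\<close>], of x0]) auto
  have "dist (avg x) (avg x0) \<le> e/2" if "x \<in> N" for x
  proof -
    have "norm (unitary_translate act g W x - unitary_translate act g W x0) \<le> e/2" for W
      using N(3)[OF that, of W] \<open>e > 0\<close> by (simp add: unitary_translate_def dist_norm less_imp_le)
    then have "norm (\<integral>W. unitary_translate act g W x - unitary_translate act g W x0 \<partial>H) \<le> ?c * (e/2)"
      using Bochner_Integration.integrable_diff[OF integrable_translate integrable_translate]
      by (intro norm_integral_le_measure_mult finite_H)
    moreover have "avg x - avg x0 = (1 / ?c) *\<^sub>R
        (\<integral>W. unitary_translate act g W x - unitary_translate act g W x0 \<partial>H)"
      unfolding unitary_average_def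
      by (simp add: Bochner_Integration.integral_diff[OF integrable_translate integrable_translate] scaleR_diff_right)
    ultimately show ?thesis
      using measure_H_pos by (simp add: dist_norm divide_le_eq mult.commute)
  qed
  then show "\<forall>\<^sub>F x in at x0. dist (avg x) (avg x0) < e"
    unfolding eventually_at_topological using N(1,2) \<open>e > 0\<close> by fastforce
qed

lemma equivariant_average: "equivariant act avg"
  unfolding equivariant_def
proof (intro allI impI)
  fix V :: "complex^'n^'n" and x assume V: "unitary_mat V"
  have mult_m: "(\<lambda>W. V ** W) \<in> H \<rightarrow>\<^sub>M borel"
    unfolding measurable_cong_sets[OF sets_H refl]
    by (intro borel_measurable_continuous_onI continuous_intros)
  have translate_m: "(\<lambda>W. unitary_translate act g W y) \<in> borel_measurable borel" for y
    using measurable_translate by (simp add: measurable_cong_sets[OF sets_H refl])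
  have "(\<integral>W. unitary_translate act g W (act V x) \<partial>H)
      = (\<integral>W. unitary_translate act g W (act V x) \<partial>distr H borel (\<lambda>W. V ** W))"
    by (simp add: invariant_H[OF V])
  also have "\<dots> = (\<integral>W. unitary_translate act g (V ** W) (act V x) \<partial>H)"
    by (rule integral_distr[OF mult_m translate_m])
  also have "\<dots> = (\<integral>W. V ** unitary_translate act g W x ** cadj V \<partial>H)"
    by (simp add: unitary_translate_mult[OF act V])
  also have "\<dots> = V ** (\<integral>W. unitary_translate act g W x \<partial>H) ** cadj V"
    by (rule integral_bounded_linear[OF bounded_linear_conj_unitary[OF V] integrable_translate])
  finally show "avg (act V x) = V ** avg x ** cadj V"
    using linear_cmul[OF bounded_linear.linear[OF bounded_linear_conj_unitary[OF V]]]
    by (simp add: unitary_average_def)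
qed

lemma opnorm_average_le:
  assumes "\<And>x. opnorm (g x) \<le> M" shows "opnorm (avg x) \<le> M"
proof -
  let ?c = "measure H (space H)"
  have M0: "M \<ge> 0" using assms[of x] opnorm_nonneg[of "g x"] by linarith
  have translate_le: "opnorm (unitary_translate act g W x) \<le> M" for W
    using assms[of "act (cadj W) x"] M0 by (simp add: unitary_translate_def opnorm_conj_unitary)
  have "opnorm (\<integral>W. unitary_translate act g W x \<partial>H) \<le> ?c * M"
  proof (rule opnorm_le)
    fix v
    have "norm (unitary_translate act g W x *v v) \<le> M * norm v" for W
      using opnorm_matrix_vector_mult[of "unitary_translate act g W x" v] translate_le[of W]
      by (meson mult_right_mono norm_ge_zero order_trans)
    then have "norm (\<integral>W. unitary_translate act g W x *v v \<partial>H) \<le> ?c * (M * norm v)"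
      using finite_H integrable_bounded_linear[OF bounded_linear_matrix_vector_mult_left integrable_translate]
      by (intro norm_integral_le_measure_mult) auto
    then show "norm ((\<integral>W. unitary_translate act g W x \<partial>H) *v v) \<le> ?c * M * norm v"
      by (simp add: integral_bounded_linear[OF bounded_linear_matrix_vector_mult_left
          integrable_translate, symmetric] mult_ac)
  qed
  then show ?thesis using measure_H_pos by (simp add: unitary_average_def opnorm_scaleR field_simps)
qed

text \<open>On an orbit-closed set where \<open>g\<close> agrees with an equivariant \<open>f\<close>, every translate of \<open>g\<close>
  is \<open>f\<close> again, so averaging reproduces \<open>f\<close>.\<close>

lemma average_eq_equivariant:
  assumes eqv: "equivariant act f"
    and S: "\<And>W y. unitary_mat W \<Longrightarrow> y \<in> S \<Longrightarrow> act W y \<in> S"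
    and gf: "\<And>y. y \<in> S \<Longrightarrow> g y = f y" and x: "x \<in> S"
  shows "avg x = f x"
proof -
  have "AE W in H. unitary_translate act g W x = f x"
    using AE_unitary_H
  proof eventually_elim
    fix W :: "complex^'n^'n" assume W: "unitary_mat W"
    have "g (act (cadj W) x) = cadj W ** f x ** W"
      using gf[OF S[OF unitary_mat_cadj[OF W] x]] eqv unitary_mat_cadj[OF W]
      by (simp add: equivariant_def n_space_action_cadj[OF act W])
    then show "unitary_translate act g W x = f x"
      using W by (simp add: unitary_translate_def matrix_mul_assoc unitary_mat_def)
        (simp add: matrix_mul_assoc[symmetric] unitary_mat_def)
  qed
  then have "(\<integral>W. unitary_translate act g W x \<partial>H) = (\<integral>W. f x \<partial>H)"
    by (intro integral_cong_AE measurable_translate) simp_all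
  also have "\<dots> = measure H (space H) *\<^sub>R f x"
    by simp
  finally have "(\<integral>W. unitary_translate act g W x \<partial>H) = measure H (space H) *\<^sub>R f x" .
  then show ?thesis using measure_H_pos by (simp add: unitary_average_def)
qed

lemma average_eq_0:
  assumes "\<And>y. y \<notin> C \<Longrightarrow> g y = 0" and "x \<notin> unitary_orbit act C"
  shows "avg x = 0"
proof -
  have "act (cadj W) x \<notin> C" if "unitary_mat W" for W
  proof
    assume "act (cadj W) x \<in> C"
    then have "act W (act (cadj W) x) \<in> unitary_orbit act C"
      using that by (force simp: unitary_orbit_def)
    then show False using assms(2) n_space_action_cadj[OF act that] by simp
  qed
  then have "unitary_translate act g W x = 0" for W
    using assms(1) by (simp add: unitary_translate_def)
  then show ?thesis by (simp add: unitary_average_def)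
qed

end

lemma Cstar_memberI:
  assumes "continuous_on UNIV g" "equivariant act g" "compact C" "\<And>x. x \<notin> C \<Longrightarrow> g x = 0"
  shows "g \<in> Cstar act"
  unfolding Cstar_def using assms by force

lemma bdd_above_opnorm:
  assumes "bounded (range f)" shows "bdd_above (range (\<lambda>x. opnorm (f x :: complex^'n^'n)))"
proof -
  obtain B where "\<And>x. norm (f x) \<le> B" using assms by (auto simp: bounded_iff)
  then have "opnorm (f x) \<le> real CARD('n) * real CARD('n) * B" for x
    using opnorm_le_norm[of "f x"] by (meson mult_left_mono of_nat_0_le_iff order_trans mult_nonneg_nonneg)
  then show ?thesis by (intro bdd_aboveI2)
qed

lemma integral_opnorm_diff_le:
  fixes \<mu> :: "'a::topological_space measure" and f g :: "'a \<Rightarrow> complex^'n^'n"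
  assumes fin: "finite_measure \<mu>" and sets: "sets \<mu> = sets borel"
    and f: "f \<in> borel_measurable borel" and g: "g \<in> borel_measurable borel"
    and bounds: "\<And>x. opnorm (f x) \<le> M" "\<And>x. opnorm (g x) \<le> M"
    and K: "K \<in> sets borel" and agree: "\<And>x. x \<in> K \<Longrightarrow> f x = g x"
  shows "(\<integral>x. opnorm (f x - g x) \<partial>\<mu>) \<le> 2 * M * measure \<mu> (UNIV - K)"
proof -
  interpret finite_measure \<mu> by (rule fin)
  have space: "space \<mu> = UNIV" using sets by (metis sets_eq_imp_space_eq space_borel)
  have K': "UNIV - K \<in> sets \<mu>" using K sets by auto
  have le: "opnorm (f x - g x) \<le> 2 * M * indicator (UNIV - K) x" for x
    using agree[of x] opnorm_diff[of "f x" "g x"] bounds[of x] by (cases "x \<in> K") auto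
  have "norm (opnorm (f x - g x)) \<le> 2 * M" for x
    using opnorm_diff[of "f x" "g x"] bounds[of x] opnorm_nonneg[of "f x - g x"] by simp
  moreover have "(\<lambda>x. opnorm (f x - g x)) \<in> borel_measurable borel"
    using f g by (intro borel_measurable_continuous_on[OF continuous_on_opnorm] borel_measurable_diff)
  ultimately have "integrable \<mu> (\<lambda>x. opnorm (f x - g x))"
    by (intro integrable_const_bound[where B = "2 * M"]) (auto simp: measurable_cong_sets[OF sets refl])
  then have "(\<integral>x. opnorm (f x - g x) \<partial>\<mu>) \<le> (\<integral>x. 2 * M * indicator (UNIV - K) x \<partial>\<mu>)"
    using K' le by (intro integral_mono) (auto simp: emeasure_eq_measure)
  also have "\<dots> = 2 * M * measure \<mu> (UNIV - K)"
    using K' by simp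
  finally show ?thesis .
qed

lemma equivariant_extension:
  fixes act :: "complex^'n^'n \<Rightarrow> 'a::t2_space \<Rightarrow> 'a" and f :: "'a \<Rightarrow> complex^'n^'n"
  assumes lc: "locally compact (UNIV :: 'a set)" and act: "n_space_action act"
    and eqv: "equivariant act f" and K: "compact K" and f: "continuous_on K f"
    and bound: "\<And>x. x \<in> K \<Longrightarrow> opnorm (f x) \<le> M" and M: "M \<ge> 0"
  obtains g where "g \<in> Cstar act" "\<And>x. opnorm (g x) \<le> M"
    "\<And>x. x \<in> unitary_orbit act K \<Longrightarrow> g x = f x"
proof -
  have "opnorm (f x) \<le> M" if "x \<in> unitary_orbit act K" for x
    using that eqv bound by (auto simp: unitary_orbit_def equivariant_def opnorm_conj_unitary)
  then obtain g C where g: "continuous_on UNIV g" "\<And>x. x \<in> unitary_orbit act K \<Longrightarrow> g x = f x"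
    "\<And>x. opnorm (g x) \<le> M" "compact C" "\<And>x. x \<notin> C \<Longrightarrow> g x = 0"
    using bounded_compactly_supported_extension[OF lc compact_unitary_orbit[OF act K]
        continuous_on_unitary_orbit[OF act eqv K f] _ M] by metis
  define H :: "(complex^'n^'n) measure" where "H = distr invertible_ball_measure borel gram_schmidt"
  have "unitary_haar_measure H"
    unfolding H_def by (rule unitary_haar_measure_gram_schmidt)
  then interpret unitary_averaging act H g
    using act g(1) bounded_range_compact_support[OF g(1,4,5)] by unfold_locales
  show ?thesis
  proof
    show "avg \<in> Cstar act"
      using continuous_on_average equivariant_average compact_unitary_orbit[OF act g(4)]
        average_eq_0[OF g(5)] by (rule Cstar_memberI)
    show "opnorm (avg x) \<le> M" for x
      using opnorm_average_le[OF g(3)] .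
    show "avg x = f x" if "x \<in> unitary_orbit act K" for x
      using average_eq_equivariant[OF eqv _ g(2) that] unitary_orbit_invariant[OF act] by blast
  qed
qed

theorem lemma4p7:
  fixes act :: "complex^'n^'n \<Rightarrow> 'a::t2_space \<Rightarrow> 'a"
    and \<mu> :: "'a measure"
    and f :: "'a \<Rightarrow> complex^'n^'n"
    and \<epsilon> :: real
  assumes "locally compact (UNIV :: 'a set)"
    and "n_space_action act"
    and "regular_borel_measure \<mu>"
    and "f \<in> BCstar act"
    and "\<epsilon> > 0"
  shows "\<exists>g \<in> Cstar act.
           (SUP x. opnorm (g x)) \<le> (SUP x. opnorm (f x)) \<and>
           (\<integral>x. opnorm (f x - g x) \<partial>\<mu>) < \<epsilon>"
proof -
  note lc = assms(1) and act = assms(2) and \<epsilon> = assms(5)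
  have sets: "sets \<mu> = sets borel" and fin: "finite_measure \<mu>"
    and reg: "\<forall>A\<in>sets borel. emeasure \<mu> A = (SUP K \<in> {K. K \<subseteq> A \<and> compact K}. emeasure \<mu> K)"
    using assms(3) unfolding regular_borel_measure_def by auto
  have fm: "f \<in> borel_measurable borel" and eqv: "equivariant act f"
    and bdd: "bdd_above (range (\<lambda>x. opnorm (f x)))"
    using assms(4) bdd_above_opnorm unfolding BCstar_def by auto
  define M where "M = (SUP x. opnorm (f x))"
  have fM: "opnorm (f x) \<le> M" for x unfolding M_def using bdd by (intro cSUP_upper) auto
  have M0: "M \<ge> 0" using fM[of undefined] opnorm_nonneg[of "f undefined"] by linarith
  obtain K where K: "compact K" "continuous_on K f" "measure \<mu> (UNIV - K) < \<epsilon> / (2 * M + 1)"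
    using lusin_compact[OF sets fin reg fm, of "\<epsilon> / (2 * M + 1)"] \<epsilon> M0 by auto
  obtain g where g: "g \<in> Cstar act" "\<And>x. opnorm (g x) \<le> M"
    "\<And>x. x \<in> unitary_orbit act K \<Longrightarrow> g x = f x"
    using equivariant_extension[OF lc act eqv K(1,2) fM M0] by blast
  have "(\<integral>x. opnorm (f x - g x) \<partial>\<mu>) \<le> 2 * M * measure \<mu> (UNIV - unitary_orbit act K)"
    using g(1) compact_unitary_orbit[OF act K(1)]
    by (intro integral_opnorm_diff_le[OF fin sets fm _ fM g(2) _ g(3)[symmetric]])
      (auto simp: Cstar_def borel_measurable_continuous_onI compact_imp_closed borel_closed)
  also have "\<dots> \<le> 2 * M * measure \<mu> (UNIV - K)"
    using subset_unitary_orbit[OF act] fin sets M0 compact_imp_closed[OF K(1)]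
    by (intro mult_left_mono finite_measure.finite_measure_mono) auto
  also have "\<dots> < \<epsilon>"
    using K(3) M0 \<epsilon> by (simp add: field_simps) (smt (verit) mult_left_mono measure_nonneg)
  finally show ?thesis
    using g(1,2) by (auto simp: M_def intro!: bexI[of _ g] cSUP_least)
qed

end
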